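(* Let $L$ be a Skolem-free first-order language, $T$ an $L$ theory and $\Gamma$ a set of $L$ formulas. Then $\mathrm{GSI}^\omega_\Gamma(\mathit{sk}^\exists(T))\sqsubseteq_L T+\mathrm{IND}(\Gamma)$, i.e. every $L$ formula provable in $\mathrm{GSI}^\omega_\Gamma(\mathit{sk}^\exists(T))$ is provable in $T+\mathrm{IND}(\Gamma)$.
   Context: Skolem symbols $\mathfrak{s}_{Qx\varphi}$: for each formula $Qx\varphi$ ($Q\in\{\forall,\exists\}$) a new function symbol of arity $|\mathrm{FV}(Qx\varphi)|$; $L$ is Skolem-free if it contains none of the Skolem symbols obtainable (iteratively) over $L$. $\mathit{sk}^\exists$/$\mathit{sk}^\forall$: $\mathit{sk}^Q$ fixes atoms, commutes with $\wedge,\vee$, $\mathit{sk}^Q(\neg A)=\neg\mathit{sk}^{\overline Q}(A)$, $\mathit{sk}^Q(QxA(x,\vec y))=\mathit{sk}^Q(A(\mathfrak{s}_{QxA}(\vec y),\vec y))$ with $\vec y$ exactly the free variables of $QxA$, $\mathit{sk}^Q(\overline QxA)=\overline Qx\,\mathit{sk}^Q(A)$; elementwise on theories. $I_x\varphi=\forall\vec z(\varphi(0,\vec z)\wedge\forall x(\varphi(x,\vec z)\to\varphi(s(x),\vec z))\to\forall x\varphi(x,\vec z))$, $\mathrm{IND}(\Gamma)=\{I_x\gamma:\gamma\in\Gamma\}$. $\Gamma\downarrow L'=\{\gamma(\vec x,t_1,\dots,t_n):\gamma(\vec x,z_1,\dots,z_n)\in\Gamma,\ t_i$ ground $L'$ terms$\}$;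 $\Delta^-$ = formulas of $\Delta$ with at most one free variable; $\mathrm{GSI}_\Gamma(T)=T+\mathit{sk}^\exists(\mathrm{IND}((\Gamma\downarrow L(T))^-))$, $\mathrm{GSI}^\omega_\Gamma(T)=\bigcup_i\mathrm{GSI}^i_\Gamma(T)$ ($i$-fold iterations). *)

theory Defs
  imports Main
begin

section \<open>Syntax of first-order logic with equality (de Bruijn indices)\<close>

datatype qu = QAll | QEx

text \<open>Terms, function symbols and formulas are mutually recursive because a
Skolem symbol is indexed by a formula.  A non-Skolem function symbol
Sym f n carries its arity n; a Skolem symbol Sk q A stands for the symbol
associated with the formula (q x. A), where A is the body (bound variable = index 0).\<close>
datatype ('f,'p) tm = Var nat | App "('f,'p) fs" "('f,'p) tm list"
and ('f,'p) fs = Sym 'f nat | Sk qu "('f,'p) fm"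
and ('f,'p) fm =
    Pr 'p "('f,'p) tm list"
  | Eq "('f,'p) tm" "('f,'p) tm"
  | Neg "('f,'p) fm"
  | Conj "('f,'p) fm" "('f,'p) fm"
  | Disj "('f,'p) fm" "('f,'p) fm"
  | All "('f,'p) fm"
  | Ex "('f,'p) fm"

definition Imp :: "('f,'p) fm \<Rightarrow> ('f,'p) fm \<Rightarrow> ('f,'p) fm" where
  "Imp A B = Disj (Neg A) B"

fun qf :: "qu \<Rightarrow> ('f,'p) fm \<Rightarrow> ('f,'p) fm" where
  "qf QAll A = All A"
| "qf QEx A = Ex A"

fun dualq :: "qu \<Rightarrow> qu" where
  "dualq QAll = QEx"
| "dualq QEx = QAll"

fun fv_tm :: "('f,'p) tm \<Rightarrow> nat set" where
  "fv_tm (Var n) = {n}"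
| "fv_tm (App f ts) = (\<Union>t\<in>set ts. fv_tm t)"

fun fv_fm :: "('f,'p) fm \<Rightarrow> nat set" where
  "fv_fm (Pr p ts) = (\<Union>t\<in>set ts. fv_tm t)"
| "fv_fm (Eq s t) = fv_tm s \<union> fv_tm t"
| "fv_fm (Neg A) = fv_fm A"
| "fv_fm (Conj A B) = fv_fm A \<union> fv_fm B"
| "fv_fm (Disj A B) = fv_fm A \<union> fv_fm B"
| "fv_fm (All A) = {n. Suc n \<in> fv_fm A}"
| "fv_fm (Ex A) = {n. Suc n \<in> fv_fm A}"

fun tsub :: "(nat \<Rightarrow> ('f,'p) tm) \<Rightarrow> ('f,'p) tm \<Rightarrow> ('f,'p) tm" where
  "tsub \<sigma> (Var n) = \<sigma> n"
| "tsub \<sigma> (App f ts) = App f (map (tsub \<sigma>) ts)"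

definition up :: "(nat \<Rightarrow> ('f,'p) tm) \<Rightarrow> nat \<Rightarrow> ('f,'p) tm" where
  "up \<sigma> n = (case n of 0 \<Rightarrow> Var 0 | Suc m \<Rightarrow> tsub (Var \<circ> Suc) (\<sigma> m))"

fun fsub :: "(nat \<Rightarrow> ('f,'p) tm) \<Rightarrow> ('f,'p) fm \<Rightarrow> ('f,'p) fm" where
  "fsub \<sigma> (Pr p ts) = Pr p (map (tsub \<sigma>) ts)"
| "fsub \<sigma> (Eq s t) = Eq (tsub \<sigma> s) (tsub \<sigma> t)"
| "fsub \<sigma> (Neg A) = Neg (fsub \<sigma> A)"
| "fsub \<sigma> (Conj A B) = Conj (fsub \<sigma> A) (fsub \<sigma> B)"
| "fsub \<sigma> (Disj A B) = Disj (fsub \<sigma> A) (fsub \<sigma> B)"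
| "fsub \<sigma> (All A) = All (fsub (up \<sigma>) A)"
| "fsub \<sigma> (Ex A) = Ex (fsub (up \<sigma>) A)"

text \<open>inst t A = A(t): substitute t for the bound variable 0 of a quantifier body.\<close>
definition inst :: "('f,'p) tm \<Rightarrow> ('f,'p) fm \<Rightarrow> ('f,'p) fm" where
  "inst t A = fsub (\<lambda>n. case n of 0 \<Rightarrow> t | Suc m \<Rightarrow> Var m) A"

definition lift :: "('f,'p) fm \<Rightarrow> ('f,'p) fm" where
  "lift A = fsub (Var \<circ> Suc) A"

text \<open>A language is given by a set F of function symbols and a set P of
predicate symbols paired with their arities (equality is logical).\<close>

fun arity :: "('f,'p) fs \<Rightarrow> nat" where
  "arity (Sym f n) = n"
| "arity (Sk q A) = card (fv_fm (qf q A))"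

fun wf_tm :: "('f,'p) fs set \<Rightarrow> ('f,'p) tm \<Rightarrow> bool" where
  "wf_tm F (Var n) = True"
| "wf_tm F (App f ts) = (f \<in> F \<and> length ts = arity f \<and> (\<forall>t\<in>set ts. wf_tm F t))"

fun wf_fm :: "('f,'p) fs set \<Rightarrow> ('p \<times> nat) set \<Rightarrow> ('f,'p) fm \<Rightarrow> bool" where
  "wf_fm F P (Pr p ts) = ((p, length ts) \<in> P \<and> (\<forall>t\<in>set ts. wf_tm F t))"
| "wf_fm F P (Eq s t) = (wf_tm F s \<and> wf_tm F t)"
| "wf_fm F P (Neg A) = wf_fm F P A"
| "wf_fm F P (Conj A B) = (wf_fm F P A \<and> wf_fm F P B)"
| "wf_fm F P (Disj A B) = (wf_fm F P A \<and> wf_fm F P B)"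
| "wf_fm F P (All A) = wf_fm F P A"
| "wf_fm F P (Ex A) = wf_fm F P A"

primrec skolem_stage :: "('f,'p) fs set \<Rightarrow> ('p \<times> nat) set \<Rightarrow> nat \<Rightarrow> ('f,'p) fs set" where
  "skolem_stage F P 0 = {}"
| "skolem_stage F P (Suc i) =
     {Sk q A | q A. wf_fm (F \<union> skolem_stage F P i) P (qf q A)}"

definition skolems :: "('f,'p) fs set \<Rightarrow> ('p \<times> nat) set \<Rightarrow> ('f,'p) fs set" where
  "skolems F P = (\<Union>i. skolem_stage F P i)"

definition skolem_free :: "('f,'p) fs set \<Rightarrow> ('p \<times> nat) set \<Rightarrow> bool" where
  "skolem_free F P \<longleftrightarrow> F \<inter> skolems F P = {}"

fun syms_tm :: "('f,'p) tm \<Rightarrow> ('f,'p) fs set" where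
  "syms_tm (Var n) = {}"
| "syms_tm (App f ts) = insert f (\<Union>t\<in>set ts. syms_tm t)"

fun syms_fm :: "('f,'p) fm \<Rightarrow> ('f,'p) fs set" where
  "syms_fm (Pr p ts) = (\<Union>t\<in>set ts. syms_tm t)"
| "syms_fm (Eq s t) = syms_tm s \<union> syms_tm t"
| "syms_fm (Neg A) = syms_fm A"
| "syms_fm (Conj A B) = syms_fm A \<union> syms_fm B"
| "syms_fm (Disj A B) = syms_fm A \<union> syms_fm B"
| "syms_fm (All A) = syms_fm A"
| "syms_fm (Ex A) = syms_fm A"

fun fsize :: "('f,'p) fm \<Rightarrow> nat" where
  "fsize (Pr p ts) = 1"
| "fsize (Eq s t) = 1"
| "fsize (Neg A) = Suc (fsize A)"
| "fsize (Conj A B) = Suc (fsize A + fsize B)"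
| "fsize (Disj A B) = Suc (fsize A + fsize B)"
| "fsize (All A) = Suc (fsize A)"
| "fsize (Ex A) = Suc (fsize A)"

lemma fsize_fsub[simp]: "fsize (fsub \<sigma> A) = fsize A"
  by (induction A arbitrary: \<sigma>) auto

lemma fsize_inst[simp]: "fsize (inst t A) = fsize A"
  by (simp add: inst_def)

text \<open>The Skolem term s_{QxA}(y1,...,yk), the yi being exactly the free
variables of QxA in increasing order.\<close>
definition skterm :: "qu \<Rightarrow> ('f,'p) fm \<Rightarrow> ('f,'p) tm" where
  "skterm q A = App (Sk q A) (map Var (sorted_list_of_set (fv_fm (qf q A))))"

function sk :: "qu \<Rightarrow> ('f,'p) fm \<Rightarrow> ('f,'p) fm" where
  "sk q (Pr p ts) = Pr p ts"
| "sk q (Eq s t) = Eq s t"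
| "sk q (Neg A) = Neg (sk (dualq q) A)"
| "sk q (Conj A B) = Conj (sk q A) (sk q B)"
| "sk q (Disj A B) = Disj (sk q A) (sk q B)"
| "sk q (All A) = (if q = QAll then sk q (inst (skterm QAll A) A) else All (sk q A))"
| "sk q (Ex A) = (if q = QEx then sk q (inst (skterm QEx A) A) else Ex (sk q A))"
  by pat_completeness auto
termination
  by (relation "measure (\<lambda>(q, A). fsize A)") auto

text \<open>I_x phi = forall zs (phi(0,zs) /\ forall x (phi(x,zs) --> phi(s(x),zs)) --> forall x phi(x,zs)),
zs being exactly the free variables of phi other than x.  Zero and successor
are the symbols Sym z 0 and Sym s 1.\<close>
definition ind_ax :: "'f \<Rightarrow> 'f \<Rightarrow> nat \<Rightarrow> ('f,'p) fm \<Rightarrow> ('f,'p) fm" where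
  "ind_ax z s x \<phi> =
    (let Z = fv_fm \<phi> - {x};
         k = card Z;
         \<psi> = fsub (\<lambda>n. if n = x then Var 0 else Var (Suc (card {m \<in> Z. m < n}))) \<phi>;
         base = fsub (\<lambda>n. case n of 0 \<Rightarrow> App (Sym z 0) [] | Suc m \<Rightarrow> Var m) \<psi>;
         stp = All (Imp \<psi> (fsub (\<lambda>n. case n of 0 \<Rightarrow> App (Sym s 1) [Var 0] | Suc m \<Rightarrow> Var (Suc m)) \<psi>))
     in (All ^^ k) (Imp (Conj base stp) (All \<psi>)))"

definition IND :: "'f \<Rightarrow> 'f \<Rightarrow> ('f,'p) fm set \<Rightarrow> ('f,'p) fm set" where
  "IND z s \<Gamma> = {ind_ax z s x \<gamma> | x \<gamma>. \<gamma> \<in> \<Gamma>}"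

text \<open>Gamma restricted to L': replace some free variables by ground L' terms.\<close>
definition down :: "('f,'p) fm set \<Rightarrow> ('f,'p) fs set \<Rightarrow> ('f,'p) fm set" where
  "down \<Gamma> L' = {fsub \<sigma> \<gamma> | \<sigma> \<gamma>. \<gamma> \<in> \<Gamma> \<and>
       (\<forall>n. \<sigma> n = Var n \<or> (wf_tm L' (\<sigma> n) \<and> fv_tm (\<sigma> n) = {}))}"

definition minus :: "('f,'p) fm set \<Rightarrow> ('f,'p) fm set" where
  "minus \<Delta> = {\<delta> \<in> \<Delta>. card (fv_fm \<delta>) \<le> 1}"

text \<open>The language L(T) of a theory T extending the base language F: F together
with all function symbols occurring in T.\<close>
definition lang :: "('f,'p) fs set \<Rightarrow> ('f,'p) fm set \<Rightarrow> ('f,'p) fs set" where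
  "lang F T = F \<union> (\<Union>A\<in>T. syms_fm A)"

definition GSI :: "('f,'p) fs set \<Rightarrow> 'f \<Rightarrow> 'f \<Rightarrow> ('f,'p) fm set \<Rightarrow> ('f,'p) fm set \<Rightarrow> ('f,'p) fm set" where
  "GSI F z s \<Gamma> T = T \<union> sk QEx ` IND z s (minus (down \<Gamma> (lang F T)))"

definition GSI_omega :: "('f,'p) fs set \<Rightarrow> 'f \<Rightarrow> 'f \<Rightarrow> ('f,'p) fm set \<Rightarrow> ('f,'p) fm set \<Rightarrow> ('f,'p) fm set" where
  "GSI_omega F z s \<Gamma> T = (\<Union>i. (GSI F z s \<Gamma> ^^ i) T)"

inductive nd :: "('f,'p) fm list \<Rightarrow> ('f,'p) fm \<Rightarrow> bool" where
  Assm: "A \<in> set G \<Longrightarrow> nd G A"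
| ConjI: "nd G A \<Longrightarrow> nd G B \<Longrightarrow> nd G (Conj A B)"
| ConjE1: "nd G (Conj A B) \<Longrightarrow> nd G A"
| ConjE2: "nd G (Conj A B) \<Longrightarrow> nd G B"
| DisjI1: "nd G A \<Longrightarrow> nd G (Disj A B)"
| DisjI2: "nd G B \<Longrightarrow> nd G (Disj A B)"
| DisjE: "nd G (Disj A B) \<Longrightarrow> nd (A # G) C \<Longrightarrow> nd (B # G) C \<Longrightarrow> nd G C"
| NegI: "nd (A # G) B \<Longrightarrow> nd (A # G) (Neg B) \<Longrightarrow> nd G (Neg A)"
| Class: "nd (Neg A # G) B \<Longrightarrow> nd (Neg A # G) (Neg B) \<Longrightarrow> nd G A"
| AllI: "nd (map lift G) A \<Longrightarrow> nd G (All A)"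
| AllE: "nd G (All A) \<Longrightarrow> nd G (inst t A)"
| ExI: "nd G (inst t A) \<Longrightarrow> nd G (Ex A)"
| ExE: "nd G (Ex A) \<Longrightarrow> nd (A # map lift G) (lift B) \<Longrightarrow> nd G B"
| Refl: "nd G (Eq t t)"
| Subst: "nd G (Eq t u) \<Longrightarrow> nd G (inst t A) \<Longrightarrow> nd G (inst u A)"

definition prov :: "('f,'p) fm set \<Rightarrow> ('f,'p) fm \<Rightarrow> bool" where
  "prov T A \<longleftrightarrow> (\<exists>G. set G \<subseteq> T \<and> nd G A)"

end

theory Submission
  imports Defs
begin

text \<open>
By completeness it suffices to expand every model M of T + IND(\<Gamma>) to a model of
GSI_omega(sk(T)) that agrees with M on the language L. Each Skolem symbol is interpreted by
a witness chosen in the expansion itself (a recursion on formula size), so Skolemization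
preserves truth and sk(T) holds. An induction axiom added by GSI concerns an instance of some
\<gamma> \<in> \<Gamma> by ground terms of the expanded language; these terms denote fixed elements of M,
and the induction axiom for \<gamma> in M, with these elements as parameters, gives its truth.
Completeness is proved by a Henkin construction whose witnesses are the Skolem constants of
closed existential formulas; since L is Skolem-free they are fresh, so the Henkin axioms
are conservative.
\<close>

lemma up_0 [simp]: "up \<sigma> 0 = Var 0"
  by (simp add: up_def)

lemma up_Suc [simp]: "up \<sigma> (Suc m) = tsub (Var \<circ> Suc) (\<sigma> m)"
  by (simp add: up_def)

lemma up_Var [simp]: "up Var = Var"
  by (auto simp: fun_eq_iff up_def split: nat.splits)

lemma tsub_tsub: "tsub \<sigma> (tsub \<tau> t) = tsub (\<lambda>n. tsub \<sigma> (\<tau> n)) t"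
  by (induction t rule: fv_tm.induct) auto

lemma tsub_Var [simp]: "tsub Var t = t"
  by (induction t rule: fv_tm.induct) (auto simp: map_idI)

lemma tsub_cong:
  "(\<And>n. n \<in> fv_tm t \<Longrightarrow> \<sigma> n = \<tau> n) \<Longrightarrow>
    tsub \<sigma> t = tsub \<tau> t"
  by (induction t rule: fv_tm.induct) auto

lemma fv_tsub: "fv_tm (tsub \<sigma> t) = (\<Union>n\<in>fv_tm t. fv_tm (\<sigma> n))"
  by (induction t rule: fv_tm.induct) auto

lemma tsub_closed: "fv_tm t = {} \<Longrightarrow> tsub \<sigma> t = t"
  using tsub_cong[of t \<sigma> Var] by simp

lemma finite_fv_tm [simp]: "finite (fv_tm t)"
  by (induction t rule: fv_tm.induct) auto

lemma up_tsub: "up (\<lambda>n. tsub \<sigma> (\<tau> n)) = (\<lambda>n. tsub (up \<sigma>) (up \<tau> n))"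
  by (rule ext, case_tac n) (auto simp: tsub_tsub)

lemma fsub_fsub: "fsub \<sigma> (fsub \<tau> A) = fsub (\<lambda>n. tsub \<sigma> (\<tau> n)) A"
  by (induction A arbitrary: \<sigma> \<tau> rule: fsize.induct) (auto simp: tsub_tsub up_tsub)

lemma fsub_Var [simp]: "fsub Var A = A"
  by (induction A rule: fsize.induct) (auto simp: map_idI)

lemma fsub_cong:
  "(\<And>n. n \<in> fv_fm A \<Longrightarrow> \<sigma> n = \<tau> n) \<Longrightarrow>
    fsub \<sigma> A = fsub \<tau> A"
proof (induction A arbitrary: \<sigma> \<tau> rule: fsize.induct)
  case (1 p ts)
  have "map (tsub \<sigma>) ts = map (tsub \<tau>) ts"
  proof (rule map_cong[OF refl])
    fix t assume "t \<in> set ts"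
    then show "tsub \<sigma> t = tsub \<tau> t" using 1 by (intro tsub_cong) auto
  qed
  then show ?case by simp
next
  case (2 t u)
  have "tsub \<sigma> t = tsub \<tau> t" using 2 by (intro tsub_cong) auto
  moreover have "tsub \<sigma> u = tsub \<tau> u" using 2 by (intro tsub_cong) auto
  ultimately show ?case by simp
next
  case (3 A)
  have "fsub \<sigma> A = fsub \<tau> A" by (rule 3(1)) (use 3(2) in auto)
  then show ?case by simp
next
  case (4 A B)
  have "fsub \<sigma> A = fsub \<tau> A" by (rule 4(1)) (use 4(3) in auto)
  moreover have "fsub \<sigma> B = fsub \<tau> B" by (rule 4(2)) (use 4(3) in auto)
  ultimately show ?case by simp
next
  case (5 A B)
  have "fsub \<sigma> A = fsub \<tau> A" by (rule 5(1)) (use 5(3) in auto)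
  moreover have "fsub \<sigma> B = fsub \<tau> B" by (rule 5(2)) (use 5(3) in auto)
  ultimately show ?case by simp
next
  case (6 A)
  have "up \<sigma> n = up \<tau> n" if "n \<in> fv_fm A" for n
    using 6(2) that by (cases n) auto
  then have "fsub (up \<sigma>) A = fsub (up \<tau>) A" by (rule 6(1))
  then show ?case by simp
next
  case (7 A)
  have "up \<sigma> n = up \<tau> n" if "n \<in> fv_fm A" for n
    using 7(2) that by (cases n) auto
  then have "fsub (up \<sigma>) A = fsub (up \<tau>) A" by (rule 7(1))
  then show ?case by simp
qed

lemma fv_fsub: "fv_fm (fsub \<sigma> A) = (\<Union>n\<in>fv_fm A. fv_tm (\<sigma> n))"
proof -
  have Suc_fv_up: "Suc m \<in> fv_tm (up \<sigma> n) \<longleftrightarrow> (\<exists>k. n = Suc k \<and> m \<in> fv_tm (\<sigma> k))" for \<sigma> m n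
    by (cases n) (auto simp: fv_tsub)
  show ?thesis
    by (induction A arbitrary: \<sigma> rule: fsize.induct) (auto simp: fv_tsub Suc_fv_up)
qed

lemma fsub_closed: "fv_fm A = {} \<Longrightarrow> fsub \<sigma> A = A"
  using fsub_cong[of A \<sigma> Var] by simp

lemma finite_fv_fm [simp]: "finite (fv_fm A)"
proof (induction A rule: fsize.induct)
  case (6 A)
  then show ?case using finite_vimageI[of "fv_fm A" Suc] by (simp add: vimage_def)
next
  case (7 A)
  then show ?case using finite_vimageI[of "fv_fm A" Suc] by (simp add: vimage_def)
qed auto

lemma closed_All_iff: "fv_fm (All A) = {} \<longleftrightarrow> fv_fm A \<subseteq> {0}"
  by auto (metis not0_implies_Suc)

lemma closed_Ex_iff: "fv_fm (Ex A) = {} \<longleftrightarrow> fv_fm A \<subseteq> {0}"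
  by auto (metis not0_implies_Suc)

lemma fv_Alls: "fv_fm ((All ^^ k) A) = {n. n + k \<in> fv_fm A}"
  by (induction k arbitrary: A) auto

lemma lift_closed: "fv_fm A = {} \<Longrightarrow> lift A = A"
  by (simp add: lift_def fsub_closed)

lemma fsub_lift: "fsub (up \<sigma>) (lift B) = lift (fsub \<sigma> B)"
  by (simp add: lift_def fsub_fsub)

lemma fsub_inst: "fsub \<sigma> (inst t A) = inst (tsub \<sigma> t) (fsub (up \<sigma>) A)"
  unfolding inst_def fsub_fsub
  by (rule fsub_cong) (auto split: nat.splits simp: tsub_tsub)

lemma inst_Var0_up_lift: "inst (Var 0) (fsub (up (Var \<circ> Suc)) A) = (A :: ('f,'p) fm)"
proof -
  have "tsub (case_nat (Var 0) Var) (up (Var \<circ> Suc) n) = (Var n :: ('f,'p) tm)" for n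
    by (cases n) auto
  then have "inst (Var 0) (fsub (up (Var \<circ> Suc)) A) = fsub Var A"
    unfolding inst_def fsub_fsub by (intro fsub_cong) simp
  then show ?thesis by simp
qed

lemma inst_Var0: "fv_fm A \<subseteq> {0} \<Longrightarrow> inst (Var 0) A = A"
proof -
  assume "fv_fm A \<subseteq> {0}"
  then have "inst (Var 0) A = fsub Var A"
    unfolding inst_def by (intro fsub_cong) (auto split: nat.splits)
  then show ?thesis by simp
qed

lemma fv_inst_closed:
  "fv_tm t = {} \<Longrightarrow> fv_fm A \<subseteq> {0} \<Longrightarrow> fv_fm (inst t A) = {}"
  unfolding inst_def fv_fsub by (auto split: nat.splits)

lemma wf_tm_iff_syms: "wf_tm X t \<longleftrightarrow> wf_tm UNIV t \<and> syms_tm t \<subseteq> X"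
  by (induction t rule: fv_tm.induct) auto

lemma wf_fm_iff_syms: "wf_fm X P A \<longleftrightarrow> wf_fm UNIV P A \<and> syms_fm A \<subseteq> X"
  by (induction A rule: fsize.induct) (auto simp: wf_tm_iff_syms[of X])

lemma wf_fm_syms: "wf_fm X P A \<Longrightarrow> syms_fm A \<subseteq> X"
  by (simp add: wf_fm_iff_syms[of X])

lemma wf_fm_mono_syms: "wf_fm X P A \<Longrightarrow> syms_fm A \<subseteq> Y \<Longrightarrow> wf_fm Y P A"
  by (metis wf_fm_iff_syms)

lemma wf_tm_mono: "wf_tm X t \<Longrightarrow> X \<subseteq> Y \<Longrightarrow> wf_tm Y t"
  by (metis wf_tm_iff_syms order_trans)

lemma wf_fm_mono: "wf_fm X P A \<Longrightarrow> X \<subseteq> Y \<Longrightarrow> wf_fm Y P A"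
  by (metis wf_fm_iff_syms order_trans)

lemma finite_syms_fm [simp]: "finite (syms_fm A)"
proof -
  have "finite (syms_tm t)" for t :: "('f,'p) tm"
    by (induction t rule: fv_tm.induct) auto
  then show ?thesis by (induction A rule: fsize.induct) auto
qed

lemma wf_tsub:
  "wf_tm X t \<Longrightarrow> (\<And>n. wf_tm X (\<sigma> n)) \<Longrightarrow> wf_tm X (tsub \<sigma> t)"
  by (induction t rule: fv_tm.induct) auto

lemma wf_fsub:
  "wf_fm X P A \<Longrightarrow> (\<And>n. wf_tm X (\<sigma> n)) \<Longrightarrow>
    wf_fm X P (fsub \<sigma> A)"
proof -
  have wf_up: "(\<And>n. wf_tm X (\<sigma> n)) \<Longrightarrow> wf_tm X (up \<sigma> n)" for \<sigma> n
    by (cases n) (auto intro: wf_tsub)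
  show "wf_fm X P A \<Longrightarrow> (\<And>n. wf_tm X (\<sigma> n)) \<Longrightarrow> wf_fm X P (fsub \<sigma> A)"
    by (induction A arbitrary: \<sigma> rule: fsize.induct) (auto intro: wf_tsub wf_up)
qed

lemma wf_inst: "wf_fm X P A \<Longrightarrow> wf_tm X t \<Longrightarrow> wf_fm X P (inst t A)"
  unfolding inst_def by (rule wf_fsub) (auto split: nat.splits)

lemma wf_Alls [simp]: "wf_fm X P ((All ^^ k) A) = wf_fm X P A"
  by (induction k) auto

lemma size_syms_tm: "f \<in> syms_tm t \<Longrightarrow> size f < size t"
proof (induction t rule: fv_tm.induct)
  case (2 g ts)
  show ?case
  proof (cases "f = g")
    case False
    then obtain t where t: "t \<in> set ts" "f \<in> syms_tm t" using 2(2) by auto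
    then have "size f < size_list size ts" using size_list_estimation 2(1) by metis
    then show ?thesis by simp
  qed simp
qed simp

lemma size_syms_fm: "f \<in> syms_fm A \<Longrightarrow> size f < size A"
proof (induction A rule: fsize.induct)
  case (1 p ts)
  then obtain t where t: "t \<in> set ts" "f \<in> syms_tm t" by auto
  then have "size f < size_list size ts" using size_list_estimation size_syms_tm by metis
  then show ?case by simp
qed (auto dest!: size_syms_tm)

lemma Sk_notin_syms_body: "Sk q A \<notin> syms_fm A"
  using size_syms_fm[of "Sk q A" A] by auto

lemma syms_tsub: "syms_tm (tsub \<sigma> t) \<subseteq> syms_tm t \<union> (\<Union>n. syms_tm (\<sigma> n))"
  by (induction t rule: fv_tm.induct) auto

lemma syms_up: "syms_tm (up \<sigma> n) \<subseteq> (\<Union>n. syms_tm (\<sigma> n))"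
proof (cases n)
  case (Suc m)
  have "syms_tm (tsub (Var \<circ> Suc) (\<sigma> m)) \<subseteq> syms_tm (\<sigma> m)"
    using syms_tsub[of "Var \<circ> Suc" "\<sigma> m"] by simp
  then show ?thesis using Suc by auto
qed simp

lemma syms_fsub: "syms_fm (fsub \<sigma> A) \<subseteq> syms_fm A \<union> (\<Union>n. syms_tm (\<sigma> n))"
proof (induction A arbitrary: \<sigma> rule: fsize.induct)
  case (1 p ts)
  show ?case using syms_tsub[of \<sigma>] by (simp, blast)
next
  case (2 t u)
  show ?case using syms_tsub[of \<sigma>] by (simp, blast)
next
  case (6 A)
  have "syms_fm (fsub (up \<sigma>) A) \<subseteq> syms_fm A \<union> (\<Union>n. syms_tm (up \<sigma> n))" by (rule 6)
  moreover have "(\<Union>n. syms_tm (up \<sigma> n)) \<subseteq> (\<Union>n. syms_tm (\<sigma> n))" using syms_up[of \<sigma>] by blast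
  ultimately show ?case by simp blast
next
  case (7 A)
  have "syms_fm (fsub (up \<sigma>) A) \<subseteq> syms_fm A \<union> (\<Union>n. syms_tm (up \<sigma> n))" by (rule 7)
  moreover have "(\<Union>n. syms_tm (up \<sigma> n)) \<subseteq> (\<Union>n. syms_tm (\<sigma> n))" using syms_up[of \<sigma>] by blast
  ultimately show ?case by simp blast
qed (simp; blast)+

lemma syms_inst: "syms_fm (inst t A) \<subseteq> syms_fm A \<union> syms_tm t"
  using syms_fsub[of "case_nat t Var" A] by (auto simp: inst_def split: nat.splits)

lemma nd_weaken: "nd G A \<Longrightarrow> set G \<subseteq> set G' \<Longrightarrow> nd G' A"
proof (induction G A arbitrary: G' rule: nd.induct)
  case (DisjE G A B C)
  then show ?case by (metis nd.DisjE insert_mono list.set(2))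
next
  case (NegI A G B)
  then show ?case by (metis nd.NegI insert_mono list.set(2))
next
  case (Class A G B)
  then show ?case by (metis nd.Class insert_mono list.set(2))
next
  case (AllI G A)
  then show ?case by (metis nd.AllI image_mono list.set_map)
next
  case (ExE G A B)
  then show ?case by (metis nd.ExE image_mono insert_mono list.set(2) list.set_map)
next
  case (Subst G t u A)
  then show ?case by (metis nd.Subst)
qed (auto intro: nd.intros)

lemma nd_cut: "nd G A \<Longrightarrow> nd (A # G) B \<Longrightarrow> nd G B"
  by (meson nd.DisjE nd.DisjI1)

lemma nd_explode: "nd G A \<Longrightarrow> nd G (Neg A) \<Longrightarrow> nd G B"
  by (meson nd.Class nd_weaken set_subset_Cons)

lemma nd_excluded_middle: "nd G (Disj A (Neg A))"
proof (rule nd.Class)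
  let ?N = "Neg (Disj A (Neg A))"
  have "nd (A # ?N # G) (Disj A (Neg A))"
    by (intro nd.DisjI1 nd.Assm) simp
  then have "nd (?N # G) (Neg A)"
    by (meson nd.Assm nd.NegI list.set_intros)
  then show "nd (?N # G) (Disj A (Neg A))" by (rule nd.DisjI2)
  show "nd (?N # G) ?N" by (simp add: nd.Assm)
qed

lemma nd_cases: "nd (A # G) B \<Longrightarrow> nd (Neg A # G) B \<Longrightarrow> nd G B"
  using nd_excluded_middle by (meson nd.DisjE)

lemma nd_mp: "nd G (Imp A B) \<Longrightarrow> nd G A \<Longrightarrow> nd G B"
  unfolding Imp_def
  by (meson nd.Assm nd.DisjE nd_explode nd_weaken list.set_intros(1) set_subset_Cons)

lemma nd_Neg_All_Ex_Neg:
  assumes "fv_fm A \<subseteq> {0}"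
  shows "nd [Neg (All A)] (Ex (Neg A))"
proof (rule nd.Class)
  let ?G = "[Neg (Ex (Neg A)), Neg (All A)]"
  have "nd (Neg A # ?G) (Ex (Neg A))"
    using nd.ExI[of _ "Var 0" "Neg A"] assms by (simp add: nd.Assm inst_Var0)
  then have "nd ?G A"
    by (meson nd.Class nd.Assm list.set_intros)
  moreover have "map lift ?G = ?G"
    using assms closed_All_iff[of A] closed_Ex_iff[of "Neg A"] by (simp add: lift_closed)
  ultimately have "nd ?G (All A)" using nd.AllI[of ?G A] by simp
  then show "nd (Neg (Ex (Neg A)) # [Neg (All A)]) (All A)" by simp
  show "nd (Neg (Ex (Neg A)) # [Neg (All A)]) (Neg (All A))" by (simp add: nd.Assm)
qed

lemma nd_fsub: "nd G A \<Longrightarrow> nd (map (fsub \<sigma>) G) (fsub \<sigma> A)"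
proof (induction G A arbitrary: \<sigma> rule: nd.induct)
  case (Assm A G) then show ?case by (auto intro: nd.Assm)
next
  case (ConjI G A B) then show ?case by (auto intro: nd.ConjI)
next
  case (ConjE1 G A B) then show ?case by (metis fsub.simps(4) nd.ConjE1)
next
  case (ConjE2 G A B) then show ?case by (metis fsub.simps(4) nd.ConjE2)
next
  case (DisjI1 G A B) then show ?case by (metis fsub.simps(5) nd.DisjI1)
next
  case (DisjI2 G B A) then show ?case by (metis fsub.simps(5) nd.DisjI2)
next
  case (DisjE G A B C)
  show ?case using DisjE(4)[of \<sigma>] DisjE(5)[of \<sigma>] DisjE(6)[of \<sigma>] by (auto intro: nd.DisjE)
next
  case (NegI A G B)
  show ?case using NegI(3)[of \<sigma>] NegI(4)[of \<sigma>] by (auto intro: nd.NegI)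
next
  case (Class A G B)
  show ?case using Class(3)[of \<sigma>] Class(4)[of \<sigma>] by (auto intro: nd.Class)
next
  case (AllI G A)
  have e: "map (fsub (up \<sigma>)) (map lift G) = map lift (map (fsub \<sigma>) G)"
    by (induction G) (simp_all add: fsub_lift)
  have "nd (map lift (map (fsub \<sigma>) G)) (fsub (up \<sigma>) A)"
    using AllI(2)[of "up \<sigma>"] by (simp only: e)
  then show ?case by (simp add: nd.AllI)
next
  case (AllE G A t)
  have "nd (map (fsub \<sigma>) G) (All (fsub (up \<sigma>) A))" using AllE(2)[of \<sigma>] by simp
  then show ?case by (simp add: fsub_inst nd.AllE)
next
  case (ExI G t A)
  have "nd (map (fsub \<sigma>) G) (inst (tsub \<sigma> t) (fsub (up \<sigma>) A))" using ExI(2)[of \<sigma>] by (simp add: fsub_inst)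
  then show ?case by (simp add: nd.ExI)
next
  case (ExE G A B)
  have e: "map (fsub (up \<sigma>)) (map lift G) = map lift (map (fsub \<sigma>) G)"
    by (induction G) (simp_all add: fsub_lift)
  have "nd (fsub (up \<sigma>) A # map (fsub (up \<sigma>)) (map lift G)) (fsub (up \<sigma>) (lift B))" using ExE(4)[of "up \<sigma>"] by simp
  then have "nd (fsub (up \<sigma>) A # map lift (map (fsub \<sigma>) G)) (lift (fsub \<sigma> B))" by (simp only: e fsub_lift)
  moreover have "nd (map (fsub \<sigma>) G) (Ex (fsub (up \<sigma>) A))" using ExE(3)[of \<sigma>] by simp
  ultimately show ?case by (meson nd.ExE)
next
  case (Refl G t) then show ?case by (simp add: nd.Refl)
next
  case (Subst G t u A)
  have "nd (map (fsub \<sigma>) G) (Eq (tsub \<sigma> t) (tsub \<sigma> u))" using Subst(3)[of \<sigma>] by simp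
  moreover have "nd (map (fsub \<sigma>) G) (inst (tsub \<sigma> t) (fsub (up \<sigma>) A))" using Subst(4)[of \<sigma>] by (simp add: fsub_inst)
  ultimately show ?case by (simp add: fsub_inst nd.Subst)
qed

lemma nd_All_strip:
  "nd G (All A) \<Longrightarrow> \<forall>B\<in>set G. fv_fm B = {} \<Longrightarrow> nd G A"
proof -
  assume A: "nd G (All A)" and closed: "\<forall>B\<in>set G. fv_fm B = {}"
  have "map (fsub (Var \<circ> Suc)) G = G"
    using closed by (simp add: fsub_closed map_idI)
  then have "nd G (All (fsub (up (Var \<circ> Suc)) A))"
    using nd_fsub[OF A, of "Var \<circ> Suc"] by simp
  then show "nd G A"
    using nd.AllE[of G "fsub (up (Var \<circ> Suc)) A" "Var 0"] by (simp add: inst_Var0_up_lift)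
qed

lemma nd_Alls_strip:
  "nd G ((All ^^ k) A) \<Longrightarrow> \<forall>B\<in>set G. fv_fm B = {} \<Longrightarrow> nd G A"
  by (induction k) (auto dest: nd_All_strip)

section \<open>Abstracting a function symbol to a variable\<close>

fun abstr_tm :: "('f,'p) fs \<Rightarrow> nat \<Rightarrow> ('f,'p) tm \<Rightarrow> ('f,'p) tm" where
  "abstr_tm c j (Var n) = Var n"
| "abstr_tm c j (App f ts) = (if f = c then Var j else App f (map (abstr_tm c j) ts))"

fun abstr_fm :: "('f,'p) fs \<Rightarrow> nat \<Rightarrow> ('f,'p) fm \<Rightarrow> ('f,'p) fm" where
  "abstr_fm c j (Pr p ts) = Pr p (map (abstr_tm c j) ts)"
| "abstr_fm c j (Eq s t) = Eq (abstr_tm c j s) (abstr_tm c j t)"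
| "abstr_fm c j (Neg A) = Neg (abstr_fm c j A)"
| "abstr_fm c j (Conj A B) = Conj (abstr_fm c j A) (abstr_fm c j B)"
| "abstr_fm c j (Disj A B) = Disj (abstr_fm c j A) (abstr_fm c j B)"
| "abstr_fm c j (All A) = All (abstr_fm c (Suc j) A)"
| "abstr_fm c j (Ex A) = Ex (abstr_fm c (Suc j) A)"

lemma abstr_tm_tsub:
  "abstr_tm c j2 (\<sigma> j1) = Var j2 \<Longrightarrow>
    abstr_tm c j2 (tsub \<sigma> t) = tsub (\<lambda>n. abstr_tm c j2 (\<sigma> n)) (abstr_tm c j1 t)"
  by (induction t rule: fv_tm.induct) auto

lemma abstr_tm_lift: "abstr_tm c (Suc j) (tsub (Var \<circ> Suc) u) = tsub (Var \<circ> Suc) (abstr_tm c j u)"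
proof -
  have "abstr_tm c (Suc j) (tsub (Var \<circ> Suc) u) = tsub (\<lambda>n. abstr_tm c (Suc j) ((Var \<circ> Suc) n)) (abstr_tm c j u)"
    by (rule abstr_tm_tsub) simp
  then show ?thesis by (simp add: comp_def)
qed

lemma abstr_tm_up:
  "(\<lambda>n. abstr_tm c (Suc j) (up \<sigma> n)) = up (\<lambda>n. abstr_tm c j (\<sigma> n))"
proof
  fix n show "abstr_tm c (Suc j) (up \<sigma> n) = up (\<lambda>n. abstr_tm c j (\<sigma> n)) n"
    by (cases n) (auto simp: abstr_tm_lift)
qed

lemma abstr_fm_fsub:
  "abstr_tm c j2 (\<sigma> j1) = Var j2 \<Longrightarrow>
    abstr_fm c j2 (fsub \<sigma> A) = fsub (\<lambda>n. abstr_tm c j2 (\<sigma> n)) (abstr_fm c j1 A)"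
proof (induction A arbitrary: \<sigma> j1 j2 rule: fsize.induct)
  case (6 A)
  have c: "abstr_tm c (Suc j2) (up \<sigma> (Suc j1)) = Var (Suc j2)" using 6(2) by (simp add: abstr_tm_lift)
  have "abstr_fm c (Suc j2) (fsub (up \<sigma>) A) = fsub (\<lambda>n. abstr_tm c (Suc j2) (up \<sigma> n)) (abstr_fm c (Suc j1) A)"
    by (rule 6(1)) (rule c)
  then show ?case by (simp add: abstr_tm_up)
next
  case (7 A)
  have c: "abstr_tm c (Suc j2) (up \<sigma> (Suc j1)) = Var (Suc j2)" using 7(2) by (simp add: abstr_tm_lift)
  have "abstr_fm c (Suc j2) (fsub (up \<sigma>) A) = fsub (\<lambda>n. abstr_tm c (Suc j2) (up \<sigma> n)) (abstr_fm c (Suc j1) A)"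
    by (rule 7(1)) (rule c)
  then show ?case by (simp add: abstr_tm_up)
qed (auto simp: abstr_tm_tsub)

lemma abstr_fm_lift: "abstr_fm c (Suc j) (lift B) = lift (abstr_fm c j B)"
proof -
  have "abstr_fm c (Suc j) (lift B) = fsub (\<lambda>n. abstr_tm c (Suc j) ((Var \<circ> Suc) n)) (abstr_fm c j B)"
    unfolding lift_def by (rule abstr_fm_fsub) simp
  then show ?thesis by (simp add: lift_def comp_def)
qed

lemma abstr_fm_inst: "abstr_fm c j (inst t A) = inst (abstr_tm c j t) (abstr_fm c (Suc j) A)"
proof -
  let ?\<iota> = "\<lambda>n. case n of 0 \<Rightarrow> t | Suc m \<Rightarrow> Var m"
  have "abstr_fm c j (inst t A) = fsub (\<lambda>n. abstr_tm c j (?\<iota> n)) (abstr_fm c (Suc j) A)"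
    unfolding inst_def by (rule abstr_fm_fsub) simp
  moreover have "(\<lambda>n. abstr_tm c j (?\<iota> n)) = (\<lambda>n. case n of 0 \<Rightarrow> abstr_tm c j t | Suc m \<Rightarrow> Var m)"
    by (rule ext) (simp split: nat.splits)
  ultimately show ?thesis by (simp add: inst_def)
qed

lemma nd_abstr: "nd G A \<Longrightarrow> nd (map (abstr_fm c j) G) (abstr_fm c j A)"
proof (induction G A arbitrary: j rule: nd.induct)
  case (Assm A G) then show ?case by (auto intro: nd.Assm)
next
  case (ConjI G A B) then show ?case by (auto intro: nd.ConjI)
next
  case (ConjE1 G A B) then show ?case by (metis abstr_fm.simps(4) nd.ConjE1)
next
  case (ConjE2 G A B) then show ?case by (metis abstr_fm.simps(4) nd.ConjE2)
next
  case (DisjI1 G A B) then show ?case by (metis abstr_fm.simps(5) nd.DisjI1)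
next
  case (DisjI2 G B A) then show ?case by (metis abstr_fm.simps(5) nd.DisjI2)
next
  case (DisjE G A B C)
  show ?case using DisjE(4)[of j] DisjE(5)[of j] DisjE(6)[of j] by (auto intro: nd.DisjE)
next
  case (NegI A G B)
  show ?case using NegI(3)[of j] NegI(4)[of j] by (auto intro: nd.NegI)
next
  case (Class A G B)
  show ?case using Class(3)[of j] Class(4)[of j] by (auto intro: nd.Class)
next
  case (AllI G A)
  have e: "map (abstr_fm c (Suc j)) (map lift G) = map lift (map (abstr_fm c j) G)"
    by (induction G) (simp_all add: abstr_fm_lift)
  have "nd (map lift (map (abstr_fm c j) G)) (abstr_fm c (Suc j) A)"
    using AllI(2)[of "Suc j"] by (simp only: e)
  then show ?case by (simp add: nd.AllI)
next
  case (AllE G A t)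
  have "nd (map (abstr_fm c j) G) (All (abstr_fm c (Suc j) A))" using AllE(2)[of j] by simp
  then show ?case by (simp add: abstr_fm_inst nd.AllE)
next
  case (ExI G t A)
  have "nd (map (abstr_fm c j) G) (inst (abstr_tm c j t) (abstr_fm c (Suc j) A))" using ExI(2)[of j] by (simp add: abstr_fm_inst)
  then show ?case by (simp add: nd.ExI)
next
  case (ExE G A B)
  have e: "map (abstr_fm c (Suc j)) (map lift G) = map lift (map (abstr_fm c j) G)"
    by (induction G) (simp_all add: abstr_fm_lift)
  have "nd (abstr_fm c (Suc j) A # map (abstr_fm c (Suc j)) (map lift G)) (abstr_fm c (Suc j) (lift B))" using ExE(4)[of "Suc j"] by simp
  then have "nd (abstr_fm c (Suc j) A # map lift (map (abstr_fm c j) G)) (lift (abstr_fm c j B))" by (simp only: e abstr_fm_lift)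
  moreover have "nd (map (abstr_fm c j) G) (Ex (abstr_fm c (Suc j) A))" using ExE(3)[of j] by simp
  ultimately show ?case by (meson nd.ExE)
next
  case (Refl G t) then show ?case by (simp add: nd.Refl)
next
  case (Subst G t u A)
  have "nd (map (abstr_fm c j) G) (Eq (abstr_tm c j t) (abstr_tm c j u))" using Subst(3)[of j] by simp
  moreover have "nd (map (abstr_fm c j) G) (inst (abstr_tm c j t) (abstr_fm c (Suc j) A))" using Subst(4)[of j] by (simp add: abstr_fm_inst)
  ultimately show ?case by (simp add: abstr_fm_inst nd.Subst)
qed

lemma abstr_tm_fresh: "c \<notin> syms_tm t \<Longrightarrow> abstr_tm c j t = t"
  by (induction t rule: fv_tm.induct) (auto simp: map_idI)

lemma abstr_fm_fresh: "c \<notin> syms_fm A \<Longrightarrow> abstr_fm c j A = A"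
  by (induction A arbitrary: j rule: fsize.induct) (auto simp: map_idI abstr_tm_fresh)

lemma nd_elim_Ex_Imp:
  assumes "nd (Imp (Ex A) A # G) B" and "\<forall>C\<in>set G. fv_fm C = {}"
    and "fv_fm B = {}" and "fv_fm (Ex A) = {}"
  shows "nd G B"
proof (rule nd_cases[of "Ex A"])
  have "nd (A # G) (Imp (Ex A) A)"
    unfolding Imp_def by (intro nd.DisjI2 nd.Assm) simp
  moreover have "nd (Imp (Ex A) A # A # G) B"
    by (rule nd_weaken[OF assms(1)]) auto
  ultimately have "nd (A # G) B" by (rule nd_cut)
  then have "nd (A # map lift (Ex A # G)) (lift B)"
    using assms(2-4) by (simp add: lift_closed map_idI nd_weaken subset_insertI2)
  then show "nd (Ex A # G) B"
    by (rule nd.ExE[rotated]) (simp add: nd.Assm)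
  have "nd (Neg (Ex A) # G) (Imp (Ex A) A)"
    unfolding Imp_def by (intro nd.DisjI1 nd.Assm) simp
  moreover have "nd (Imp (Ex A) A # Neg (Ex A) # G) B"
    by (rule nd_weaken[OF assms(1)]) auto
  ultimately show "nd (Neg (Ex A) # G) B" by (rule nd_cut)
qed

lemma skolem_stage_Suc_mono: "skolem_stage F P i \<subseteq> skolem_stage F P (Suc i)"
proof (induction i)
  case (Suc i)
  show ?case
  proof
    fix f assume "f \<in> skolem_stage F P (Suc i)"
    then obtain q A where "f = Sk q A" "wf_fm (F \<union> skolem_stage F P i) P (qf q A)" by auto
    moreover have "F \<union> skolem_stage F P i \<subseteq> F \<union> skolem_stage F P (Suc i)" using Suc by auto
    ultimately show "f \<in> skolem_stage F P (Suc (Suc i))" using wf_fm_mono by fastforce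
  qed
qed simp

lemma skolem_stage_mono: "i \<le> j \<Longrightarrow> skolem_stage F P i \<subseteq> skolem_stage F P j"
  using lift_Suc_mono_le[of "skolem_stage F P", OF skolem_stage_Suc_mono] by blast

lemma finite_subset_skolem_stage:
  "finite S \<Longrightarrow> S \<subseteq> F \<union> skolems F P \<Longrightarrow>
    \<exists>N. S \<subseteq> F \<union> skolem_stage F P N"
proof (induction S rule: finite_induct)
  case (insert x S)
  then obtain N where N: "S \<subseteq> F \<union> skolem_stage F P N" by auto
  show ?case
  proof (cases "x \<in> F")
    case True then show ?thesis using N by auto
  next
    case False
    then obtain M where M: "x \<in> skolem_stage F P M" using insert(4) by (auto simp: skolems_def)
    have "skolem_stage F P N \<subseteq> skolem_stage F P (max N M)" by (rule skolem_stage_mono) simp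
    moreover have "skolem_stage F P M \<subseteq> skolem_stage F P (max N M)" by (rule skolem_stage_mono) simp
    ultimately show ?thesis using N M by blast
  qed
qed simp

lemma Sk_in_skolems: "wf_fm (F \<union> skolems F P) P (qf q A) \<Longrightarrow> Sk q A \<in> skolems F P"
proof -
  assume w: "wf_fm (F \<union> skolems F P) P (qf q A)"
  obtain N where N: "syms_fm (qf q A) \<subseteq> F \<union> skolem_stage F P N"
    using finite_subset_skolem_stage[OF finite_syms_fm wf_fm_syms[OF w]] by blast
  have "wf_fm (F \<union> skolem_stage F P N) P (qf q A)" by (rule wf_fm_mono_syms[OF w N])
  then have "Sk q A \<in> skolem_stage F P (Suc N)" by (simp only: skolem_stage.simps) blast
  then show ?thesis unfolding skolems_def by blast
qed

lemma Sk_notin_skolem_free: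
  "skolem_free F P \<Longrightarrow> wf_fm (F \<union> skolems F P) P (qf q A) \<Longrightarrow> Sk q A \<notin> F"
  using Sk_in_skolems[of F P q A] unfolding skolem_free_def by blast

section \<open>Henkin axioms\<close>

text \<open>The Henkin constant of a closed formula Ex A is its nullary Skolem symbol; over a
Skolem-free language it is a fresh constant.\<close>

definition henkin_ax :: "('f,'p) fm \<Rightarrow> ('f,'p) fm" where
  "henkin_ax A = Imp (Ex A) (inst (App (Sk QEx A) []) A)"

definition henkin_axioms :: "('f,'p) fs set \<Rightarrow> ('p \<times> nat) set \<Rightarrow> ('f,'p) fm set" where
  "henkin_axioms K P = henkin_ax ` {A. wf_fm K P (Ex A) \<and> fv_fm (Ex A) = {}}"

lemma fv_henkin_ax: "fv_fm (Ex A) = {} \<Longrightarrow> fv_fm (henkin_ax A) = {}"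
  using fv_inst_closed[of "App (Sk QEx A) []" A]
  by (simp add: henkin_ax_def Imp_def closed_Ex_iff[symmetric])

lemma wf_henkin_ax:
  "wf_fm K P (Ex A) \<Longrightarrow> fv_fm (Ex A) = {} \<Longrightarrow> Sk QEx A \<in> K \<Longrightarrow> wf_fm K P (henkin_ax A)"
  using wf_inst[of K P A "App (Sk QEx A) []"] by (simp add: henkin_ax_def Imp_def)

lemma syms_henkin_ax: "syms_fm (henkin_ax A) \<subseteq> insert (Sk QEx A) (syms_fm A)"
  using syms_inst[of "App (Sk QEx A) []" A] by (auto simp: henkin_ax_def Imp_def)

lemma nd_elim_henkin_ax:
  assumes "nd (henkin_ax A # G) B"
    and "\<forall>C\<in>set G. Sk QEx A \<notin> syms_fm C \<and> fv_fm C = {}"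
    and "Sk QEx A \<notin> syms_fm B" and "fv_fm B = {}" and "fv_fm (Ex A) = {}"
  shows "nd G B"
proof (rule nd_elim_Ex_Imp)
  let ?abstr = "abstr_fm (Sk QEx A) 0"
  have "fv_fm A \<subseteq> {0}"
    using assms(5) closed_Ex_iff by blast
  then have "?abstr (henkin_ax A) = Imp (Ex A) A"
    using Sk_notin_syms_body[of QEx A]
    by (simp add: henkin_ax_def Imp_def abstr_fm_inst abstr_fm_fresh inst_Var0)
  moreover have "map ?abstr G = G"
    using assms(2) by (simp add: abstr_fm_fresh map_idI)
  ultimately show "nd (Imp (Ex A) A # G) B"
    using nd_abstr[OF assms(1), of "Sk QEx A" 0] assms(3) by (simp add: abstr_fm_fresh)
qed (use assms in auto)

text \<open>Henkin axioms are eliminated one by one, largest formula first: its Skolem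
constant is larger than every formula of the remaining axioms, so it occurs in none of them.\<close>

lemma nd_elim_henkin_axioms_finite:
  assumes sf: "skolem_free F P"
    and S: "\<forall>C\<in>S. syms_fm C \<subseteq> F \<and> fv_fm C = {}"
    and B: "syms_fm B \<subseteq> F" "fv_fm B = {}"
  shows "finite X \<Longrightarrow> X \<subseteq> {A. wf_fm (F \<union> skolems F P) P (Ex A) \<and> fv_fm (Ex A) = {}} \<Longrightarrow>
    set G \<subseteq> S \<union> henkin_ax ` X \<Longrightarrow> nd G B \<Longrightarrow> \<exists>G'. set G' \<subseteq> S \<and> nd G' B"
proof (induction X arbitrary: G rule: finite_ranking_induct[where f = size])
  case empty
  then show ?case by auto
next
  case (insert A X)
  let ?c = "Sk QEx A"
  define G1 where "G1 = filter (\<lambda>C. C \<noteq> henkin_ax A) G"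
  have A: "wf_fm (F \<union> skolems F P) P (Ex A)" "fv_fm (Ex A) = {}"
    using insert.prems(1) by auto
  have cF: "?c \<notin> F"
    using Sk_notin_skolem_free[OF sf] A(1) by simp
  have fresh: "?c \<notin> syms_fm (henkin_ax A')" if "A' \<in> X" "A' \<noteq> A" for A'
  proof -
    have "?c \<notin> syms_fm A'"
      using size_syms_fm[of ?c A'] insert.hyps(2)[OF that(1)] by auto
    then show ?thesis using syms_henkin_ax[of A'] that(2) by auto
  qed
  have G1: "?c \<notin> syms_fm C \<and> fv_fm C = {}" if C: "C \<in> set G1" for C
  proof (cases "C \<in> S")
    case True
    then show ?thesis using S cF by blast
  next
    case False
    then obtain A' where A': "A' \<in> X" "A' \<noteq> A" "C = henkin_ax A'"
      using C insert.prems(2) by (auto simp: G1_def)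
    then have "fv_fm (Ex A') = {}" using insert.prems(1) by blast
    then show ?thesis using fresh[OF A'(1,2)] fv_henkin_ax A'(3) by simp
  qed
  have "nd (henkin_ax A # G1) B"
    by (rule nd_weaken[OF insert.prems(3)]) (auto simp: G1_def)
  then have "nd G1 B"
    by (rule nd_elim_henkin_ax) (use G1 B cF A(2) in auto)
  moreover have "set G1 \<subseteq> S \<union> henkin_ax ` X"
    using insert.prems(2) by (auto simp: G1_def)
  ultimately show ?case
    using insert.IH insert.prems(1) by blast
qed

lemma nd_elim_henkin_axioms:
  assumes "skolem_free F P"
    and "\<forall>C\<in>S. syms_fm C \<subseteq> F \<and> fv_fm C = {}"
    and "syms_fm B \<subseteq> F" "fv_fm B = {}"
    and "set G \<subseteq> S \<union> henkin_axioms (F \<union> skolems F P) P" and "nd G B"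
  shows "\<exists>G'. set G' \<subseteq> S \<and> nd G' B"
proof -
  let ?Ex = "{A. wf_fm (F \<union> skolems F P) P (Ex A) \<and> fv_fm (Ex A) = {}}"
  have "finite (set G - S)" and "set G - S \<subseteq> henkin_ax ` ?Ex"
    using assms(5) unfolding henkin_axioms_def by auto
  then obtain X where X: "X \<subseteq> ?Ex" "finite X" "set G - S = henkin_ax ` X"
    using finite_subset_image by meson
  then have "set G \<subseteq> S \<union> henkin_ax ` X" by blast
  then show ?thesis
    by (rule nd_elim_henkin_axioms_finite[OF assms(1-4) X(2,1) _ assms(6)])
qed

section \<open>Semantics and soundness\<close>

fun eval_tm :: "(('f,'p) fs \<Rightarrow> 'a list \<Rightarrow> 'a) \<Rightarrow> (nat \<Rightarrow> 'a) \<Rightarrow> ('f,'p) tm \<Rightarrow> 'a" where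
  "eval_tm fI e (Var n) = e n"
| "eval_tm fI e (App f ts) = fI f (map (eval_tm fI e) ts)"

fun holds :: "'a set \<Rightarrow> (('f,'p) fs \<Rightarrow> 'a list \<Rightarrow> 'a) \<Rightarrow> ('p \<Rightarrow> 'a list \<Rightarrow> bool) \<Rightarrow> (nat \<Rightarrow> 'a) \<Rightarrow> ('f,'p) fm \<Rightarrow> bool" where
  "holds D fI pI e (Pr p ts) = pI p (map (eval_tm fI e) ts)"
| "holds D fI pI e (Eq s t) = (eval_tm fI e s = eval_tm fI e t)"
| "holds D fI pI e (Neg A) = (\<not> holds D fI pI e A)"
| "holds D fI pI e (Conj A B) = (holds D fI pI e A \<and> holds D fI pI e B)"
| "holds D fI pI e (Disj A B) = (holds D fI pI e A \<or> holds D fI pI e B)"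
| "holds D fI pI e (All A) = (\<forall>d\<in>D. holds D fI pI (case_nat d e) A)"
| "holds D fI pI e (Ex A) = (\<exists>d\<in>D. holds D fI pI (case_nat d e) A)"

definition is_interp :: "'a set \<Rightarrow> (('f,'p) fs \<Rightarrow> 'a list \<Rightarrow> 'a) \<Rightarrow> bool" where
  "is_interp D fI \<longleftrightarrow> D \<noteq> {} \<and> (\<forall>f ds. set ds \<subseteq> D \<longrightarrow> fI f ds \<in> D)"

lemma holds_Imp[simp]: "holds D fI pI e (Imp A B) = (holds D fI pI e A \<longrightarrow> holds D fI pI e B)"
  by (simp add: Imp_def)

lemma eval_tm_tsub: "eval_tm fI e (tsub \<sigma> t) = eval_tm fI (\<lambda>n. eval_tm fI e (\<sigma> n)) t"
proof (induction t rule: fv_tm.induct)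
  case (2 f ts)
  have "map (\<lambda>x. eval_tm fI e (tsub \<sigma> x)) ts = map (eval_tm fI (\<lambda>n. eval_tm fI e (\<sigma> n))) ts"
    by (rule map_cong[OF refl]) (rule 2)
  then show ?case by (simp add: comp_def del: map_eq_conv)
qed simp

lemma eval_tm_up:
  "(\<lambda>n. eval_tm fI (case_nat d e) (up \<sigma> n)) = case_nat d (\<lambda>n. eval_tm fI e (\<sigma> n))"
proof
  fix n show "eval_tm fI (case_nat d e) (up \<sigma> n) = case_nat d (\<lambda>n. eval_tm fI e (\<sigma> n)) n"
    by (cases n) (simp_all add: eval_tm_tsub)
qed

lemma holds_fsub:
  "holds D fI pI e (fsub \<sigma> A) = holds D fI pI (\<lambda>n. eval_tm fI e (\<sigma> n)) A"
proof (induction A arbitrary: e \<sigma> rule: fsize.induct)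
  case (6 A) then show ?case by (simp add: eval_tm_up)
next
  case (7 A) then show ?case by (simp add: eval_tm_up)
qed (simp_all add: eval_tm_tsub comp_def)

lemma holds_inst: "holds D fI pI e (inst t A) = holds D fI pI (case_nat (eval_tm fI e t) e) A"
proof -
  have "(\<lambda>n. eval_tm fI e (case n of 0 \<Rightarrow> t | Suc m \<Rightarrow> Var m)) = case_nat (eval_tm fI e t) e"
    by (rule ext) (simp split: nat.splits)
  then show ?thesis by (simp add: inst_def holds_fsub)
qed

lemma holds_lift: "holds D fI pI e (lift A) = holds D fI pI (\<lambda>n. e (Suc n)) A"
  by (simp add: lift_def holds_fsub)

lemma eval_tm_cong:
  "(\<And>n. n \<in> fv_tm t \<Longrightarrow> e n = e' n) \<Longrightarrow> eval_tm fI e t = eval_tm fI e' t"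
proof (induction t rule: fv_tm.induct)
  case (2 f ts)
  have "map (eval_tm fI e) ts = map (eval_tm fI e') ts"
    by (rule map_cong[OF refl]) (rule 2(1), simp, use 2(2) in auto)
  then show ?case by (simp del: map_eq_conv)
qed simp

lemma holds_cong:
  "(\<And>n. n \<in> fv_fm A \<Longrightarrow> e n = e' n) \<Longrightarrow>
    holds D fI pI e A = holds D fI pI e' A"
proof (induction A arbitrary: e e' rule: fsize.induct)
  case (1 p ts)
  have "map (eval_tm fI e) ts = map (eval_tm fI e') ts"
    by (rule map_cong[OF refl], rule eval_tm_cong) (use 1 in auto)
  then show ?case by (simp del: map_eq_conv)
next
  case (2 t u)
  have "eval_tm fI e t = eval_tm fI e' t" by (rule eval_tm_cong) (use 2 in auto)
  moreover have "eval_tm fI e u = eval_tm fI e' u" by (rule eval_tm_cong) (use 2 in auto)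
  ultimately show ?case by simp
next
  case (3 A)
  have "holds D fI pI e A = holds D fI pI e' A" by (rule 3(1)) (use 3(2) in auto)
  then show ?case by simp
next
  case (4 A B)
  have "holds D fI pI e A = holds D fI pI e' A" by (rule 4(1)) (use 4(3) in auto)
  moreover have "holds D fI pI e B = holds D fI pI e' B" by (rule 4(2)) (use 4(3) in auto)
  ultimately show ?case by simp
next
  case (5 A B)
  have "holds D fI pI e A = holds D fI pI e' A" by (rule 5(1)) (use 5(3) in auto)
  moreover have "holds D fI pI e B = holds D fI pI e' B" by (rule 5(2)) (use 5(3) in auto)
  ultimately show ?case by simp
next
  case (6 A)
  have "holds D fI pI (case_nat d e) A = holds D fI pI (case_nat d e') A" for d
    by (rule 6(1)) (use 6(2) in \<open>auto split: nat.splits\<close>)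
  then show ?case by simp
next
  case (7 A)
  have "holds D fI pI (case_nat d e) A = holds D fI pI (case_nat d e') A" for d
    by (rule 7(1)) (use 7(2) in \<open>auto split: nat.splits\<close>)
  then show ?case by simp
qed

lemma range_case_nat:
  "d \<in> D \<Longrightarrow> range e \<subseteq> D \<Longrightarrow> range (case_nat d e) \<subseteq> D"
  by (auto simp: image_subset_iff split: nat.splits)

lemma eval_tm_in:
  "is_interp D fI \<Longrightarrow> range e \<subseteq> D \<Longrightarrow> eval_tm fI e t \<in> D"
proof (induction t rule: fv_tm.induct)
  case (2 f ts)
  have "set (map (eval_tm fI e) ts) \<subseteq> D" using 2 by auto
  then show ?case using 2(2) by (simp add: is_interp_def)
qed auto

lemma nd_sound:
  "nd G A \<Longrightarrow> is_interp D fI \<Longrightarrow> range e \<subseteq> D \<Longrightarrow> (\<forall>B\<in>set G. holds D fI pI e B) \<Longrightarrow> holds D fI pI e A"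
proof (induction G A arbitrary: e rule: nd.induct)
  case (AllI G A)
  show ?case
  proof (simp, intro ballI)
    fix d assume d: "d \<in> D"
    show "holds D fI pI (case_nat d e) A"
      by (rule AllI(2)) (use AllI(3,4,5) d in \<open>auto simp: holds_lift range_case_nat\<close>)
  qed
next
  case (AllE G A t)
  then show ?case by (auto simp: holds_inst eval_tm_in)
next
  case (ExI G t A)
  then show ?case by (auto simp: holds_inst eval_tm_in intro!: bexI[of _ "eval_tm fI e t"])
next
  case (ExE G A B)
  obtain d where d: "d \<in> D" "holds D fI pI (case_nat d e) A" using ExE(3)[OF ExE(5) ExE(6) ExE(7)] by auto
  have "holds D fI pI (case_nat d e) (lift B)"
    by (rule ExE(4)) (use ExE(5,6,7) d in \<open>auto simp: holds_lift range_case_nat\<close>)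
  then show ?case by (simp add: holds_lift)
next
  case (Subst G t u A)
  then show ?case by (auto simp: holds_inst)
qed auto

definition is_model :: "'a set \<Rightarrow> (('f,'p) fs \<Rightarrow> 'a list \<Rightarrow> 'a) \<Rightarrow> ('p \<Rightarrow> 'a list \<Rightarrow> bool) \<Rightarrow> ('f,'p) fm set \<Rightarrow> bool" where
  "is_model D fI pI S \<longleftrightarrow> is_interp D fI \<and> (\<forall>A\<in>S. \<forall>e. range e \<subseteq> D \<longrightarrow> holds D fI pI e A)"

lemma prov_sound:
  assumes "prov S A" and "is_model D fI pI S" and "range e \<subseteq> D"
  shows "holds D fI pI e A"
proof -
  obtain G where "set G \<subseteq> S" "nd G A"
    using assms(1) by (auto simp: prov_def)
  moreover have "is_interp D fI" and "\<forall>B\<in>set G. holds D fI pI e B"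
    using assms(2,3) \<open>set G \<subseteq> S\<close> by (auto simp: is_model_def)
  ultimately show ?thesis
    using nd_sound assms(3) by blast
qed

lemma holds_Alls:
  "holds D fI pI e ((All ^^ k) B) \<longleftrightarrow> (\<forall>e'. range e' \<subseteq> D \<longrightarrow> (\<forall>n. e' (n + k) = e n) \<longrightarrow> holds D fI pI e' B)"
  if "range e \<subseteq> D"
  using that
proof (induction k arbitrary: e)
  case 0
  show ?case
  proof
    assume "holds D fI pI e ((All ^^ 0) B)"
    then show "\<forall>e'. range e' \<subseteq> D \<longrightarrow> (\<forall>n. e' (n + 0) = e n) \<longrightarrow> holds D fI pI e' B"
      by (metis add_0_right ext funpow_0)
  next
    assume "\<forall>e'. range e' \<subseteq> D \<longrightarrow> (\<forall>n. e' (n + 0) = e n) \<longrightarrow> holds D fI pI e' B"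
    then show "holds D fI pI e ((All ^^ 0) B)" using 0 by simp
  qed
next
  case (Suc k)
  show ?case
  proof
    assume h: "holds D fI pI e ((All ^^ Suc k) B)"
    show "\<forall>e'. range e' \<subseteq> D \<longrightarrow> (\<forall>n. e' (n + Suc k) = e n) \<longrightarrow> holds D fI pI e' B"
    proof (intro allI impI)
      fix e' :: "nat \<Rightarrow> 'a" assume r: "range e' \<subseteq> D" and a: "\<forall>n. e' (n + Suc k) = e n"
      have d: "e' k \<in> D" using r by auto
      have "holds D fI pI (case_nat (e' k) e) ((All ^^ k) B)" using h d by simp
      moreover have "\<forall>n. e' (n + k) = case_nat (e' k) e n"
        using a by (auto split: nat.splits)
      ultimately show "holds D fI pI e' B"
        using Suc(1)[of "case_nat (e' k) e"] range_case_nat[OF d Suc(2)] r by blast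
    qed
  next
    assume h: "\<forall>e'. range e' \<subseteq> D \<longrightarrow> (\<forall>n. e' (n + Suc k) = e n) \<longrightarrow> holds D fI pI e' B"
    show "holds D fI pI e ((All ^^ Suc k) B)"
    proof (simp, intro ballI)
      fix d assume d: "d \<in> D"
      have "\<forall>e'. range e' \<subseteq> D \<longrightarrow> (\<forall>n. e' (n + k) = case_nat d e n) \<longrightarrow> holds D fI pI e' B"
      proof (intro allI impI)
        fix e' :: "nat \<Rightarrow> 'a" assume r: "range e' \<subseteq> D" and a: "\<forall>n. e' (n + k) = case_nat d e n"
        have "\<forall>n. e' (n + Suc k) = e n" using a by (metis add_Suc_shift old.nat.simps(5))
        then show "holds D fI pI e' B" using h r by blast
      qed
      then show "holds D fI pI (case_nat d e) ((All ^^ k) B)"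
        using Suc(1)[of "case_nat d e"] range_case_nat[OF d Suc(2)] by blast
    qed
  qed
qed

definition ind_principle :: "'a set \<Rightarrow> (('f,'p) fs \<Rightarrow> 'a list \<Rightarrow> 'a) \<Rightarrow> 'f \<Rightarrow> 'f \<Rightarrow> ('a \<Rightarrow> bool) \<Rightarrow> bool" where
  "ind_principle D fI z s Q \<longleftrightarrow>
     (Q (fI (Sym z 0) []) \<and> (\<forall>d\<in>D. Q d \<longrightarrow> Q (fI (Sym s 1) [d])) \<longrightarrow> (\<forall>d\<in>D. Q d))"

lemma ind_principle_cong:
  "fI' (Sym z 0) = fI (Sym z 0) \<Longrightarrow> fI' (Sym s 1) = fI (Sym s 1) \<Longrightarrow>
    ind_principle D fI' z s = ind_principle D fI z s"
  by (simp add: fun_eq_iff ind_principle_def)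

definition succ_subst :: "'f \<Rightarrow> nat \<Rightarrow> ('f,'p) tm" where
  "succ_subst s n = (case n of 0 \<Rightarrow> App (Sym s 1) [Var 0] | Suc m \<Rightarrow> Var (Suc m))"

lemma fv_succ_subst [simp]: "fv_tm (succ_subst s n) = {n}"
  by (cases n) (simp_all add: succ_subst_def)

lemma wf_succ_subst: "Sym s 1 \<in> X \<Longrightarrow> wf_tm X (succ_subst s n)"
  by (cases n) (simp_all add: succ_subst_def)

lemma eval_succ_subst:
  "(\<lambda>n. eval_tm fI (case_nat d e) (succ_subst s n)) = case_nat (fI (Sym s 1) [d]) e"
  by (rule ext, case_tac n) (simp_all add: succ_subst_def)

text \<open>The induction axiom on Var 0 of \<psi>, universally closed over the parameters
Var 1, ..., Var k of \<psi>.\<close>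

definition ind_schema :: "'f \<Rightarrow> 'f \<Rightarrow> nat \<Rightarrow> ('f,'p) fm \<Rightarrow> ('f,'p) fm" where
  "ind_schema z s k \<psi> = (All ^^ k)
     (Imp (Conj (inst (App (Sym z 0) []) \<psi>) (All (Imp \<psi> (fsub (succ_subst s) \<psi>)))) (All \<psi>))"

definition rank_in :: "nat set \<Rightarrow> nat \<Rightarrow> nat" where
  "rank_in Z n = card {m \<in> Z. m < n}"

lemma rank_in_less_card: "finite Z \<Longrightarrow> n \<in> Z \<Longrightarrow> rank_in Z n < card Z"
  unfolding rank_in_def by (rule psubset_card_mono) auto

lemma inj_on_rank_in: "finite Z \<Longrightarrow> inj_on (rank_in Z) Z"
proof (rule inj_onI)
  have mono: "rank_in Z m < rank_in Z n" if "finite Z" "m \<in> Z" "m < n" for m n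
    unfolding rank_in_def using that by (intro psubset_card_mono) auto
  fix m n assume "finite Z" "m \<in> Z" "n \<in> Z" "rank_in Z m = rank_in Z n"
  then show "m = n"
    using mono[of m n] mono[of n m] by (metis less_irrefl linorder_neqE_nat)
qed

text \<open>In ind_ax the parameters of \<phi> other than x become Var 1, ..., Var k in the order
of their indices; rank_in computes this position.\<close>

lemma ind_ax_eq_ind_schema:
  "ind_ax z s x \<phi> = ind_schema z s (card (fv_fm \<phi> - {x}))
     (fsub (\<lambda>n. if n = x then Var 0 else Var (Suc (rank_in (fv_fm \<phi> - {x}) n))) \<phi>)"
  unfolding ind_ax_def ind_schema_def succ_subst_def inst_def rank_in_def Let_def by (rule refl)

lemma holds_ind_schema:
  assumes "range e \<subseteq> D"
  shows "holds D fI pI e (ind_schema z s k \<psi>) \<longleftrightarrow>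
    (\<forall>e'. range e' \<subseteq> D \<longrightarrow> (\<forall>n. e' (n + k) = e n) \<longrightarrow>
       ind_principle D fI z s (\<lambda>d. holds D fI pI (case_nat d e') \<psi>))"
  unfolding ind_schema_def holds_Alls[OF assms]
  by (simp add: ind_principle_def holds_inst holds_fsub eval_succ_subst)

lemma fv_ind_schema:
  assumes "fv_fm \<psi> \<subseteq> {..k}"
  shows "fv_fm (ind_schema z s k \<psi>) = {}"
proof -
  have "fv_fm (inst (App (Sym z 0) []) \<psi>) \<subseteq> {..<k}"
    using assms by (auto simp: inst_def fv_fsub split: nat.splits)
  moreover have "fv_fm (fsub (succ_subst s) \<psi>) \<subseteq> {..k}"
    using assms by (auto simp: fv_fsub)
  ultimately show ?thesis
    using assms by (auto simp: ind_schema_def fv_Alls Imp_def)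
qed

lemma wf_ind_schema:
  "wf_fm X P \<psi> \<Longrightarrow> Sym z 0 \<in> X \<Longrightarrow> Sym s 1 \<in> X \<Longrightarrow> wf_fm X P (ind_schema z s k \<psi>)"
  unfolding ind_schema_def Imp_def by (auto intro!: wf_inst wf_fsub wf_succ_subst)

lemma fv_ind_ax: "fv_fm (ind_ax z s x \<phi>) = {}"
proof -
  let ?Z = "fv_fm \<phi> - {x}"
  have "fv_fm (fsub (\<lambda>n. if n = x then Var 0 else Var (Suc (rank_in ?Z n))) \<phi>) \<subseteq> {..card ?Z}"
    using rank_in_less_card[of ?Z] by (auto simp: fv_fsub Suc_le_eq split: if_splits)
  then show ?thesis
    unfolding ind_ax_eq_ind_schema by (rule fv_ind_schema)
qed

lemma wf_ind_ax:
  "wf_fm X P \<phi> \<Longrightarrow> Sym z 0 \<in> X \<Longrightarrow> Sym s 1 \<in> X \<Longrightarrow>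
    wf_fm X P (ind_ax z s x \<phi>)"
  unfolding ind_ax_eq_ind_schema by (intro wf_ind_schema wf_fsub) auto

lemma holds_ind_ax_packed:
  assumes "range e \<subseteq> D"
  shows "holds D fI pI e (ind_ax z s x \<phi>) \<longleftrightarrow>
    (\<forall>e''. range e'' \<subseteq> D \<longrightarrow> (\<forall>n. e'' (n + card (fv_fm \<phi> - {x})) = e n) \<longrightarrow>
       ind_principle D fI z s (\<lambda>d. holds D fI pI ((\<lambda>n. e'' (rank_in (fv_fm \<phi> - {x}) n))(x := d)) \<phi>))"
proof -
  have "holds D fI pI (case_nat d e'') (fsub (\<lambda>n. if n = x then Var 0 else Var (Suc (rank_in Z n))) \<phi>)
      = holds D fI pI ((\<lambda>n. e'' (rank_in Z n))(x := d)) \<phi>" for e'' d Z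
    unfolding holds_fsub by (intro holds_cong) simp
  then show ?thesis
    unfolding ind_ax_eq_ind_schema holds_ind_schema[OF assms] by simp
qed

lemma pack_env:
  assumes "finite Z" and "range e' \<subseteq> D" and "range e \<subseteq> D"
  obtains e'' where "range e'' \<subseteq> D" "\<forall>n. e'' (n + card Z) = e n" "\<forall>n\<in>Z. e'' (rank_in Z n) = e' n"
proof
  let ?e'' = "\<lambda>i. if i < card Z then e' (the_inv_into Z (rank_in Z) i) else e (i - card Z)"
  show "range ?e'' \<subseteq> D" "\<forall>n. ?e'' (n + card Z) = e n"
    using assms(2,3) by auto
  show "\<forall>n\<in>Z. ?e'' (rank_in Z n) = e' n"
    using rank_in_less_card[OF assms(1)] the_inv_into_f_f[OF inj_on_rank_in[OF assms(1)]] by simp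
qed

lemma holds_ind_ax:
  fixes D :: "'a set"
  assumes "range e \<subseteq> D"
  shows "holds D fI pI e (ind_ax z s x \<phi>) \<longleftrightarrow>
    (\<forall>e'. range e' \<subseteq> D \<longrightarrow> ind_principle D fI z s (\<lambda>d. holds D fI pI (e'(x := d)) \<phi>))"
  unfolding holds_ind_ax_packed[OF assms]
proof (intro iffI allI impI)
  let ?Z = "fv_fm \<phi> - {x}"
  fix e' :: "nat \<Rightarrow> 'a" assume hyp: "\<forall>e''. range e'' \<subseteq> D \<longrightarrow> (\<forall>n. e'' (n + card ?Z) = e n) \<longrightarrow>
      ind_principle D fI z s (\<lambda>d. holds D fI pI ((\<lambda>n. e'' (rank_in ?Z n))(x := d)) \<phi>)"
    and "range e' \<subseteq> D"
  obtain e'' where "range e'' \<subseteq> D" "\<forall>n. e'' (n + card ?Z) = e n" and e'': "\<forall>n\<in>?Z. e'' (rank_in ?Z n) = e' n"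
    using pack_env[OF finite_Diff[OF finite_fv_fm] \<open>range e' \<subseteq> D\<close> assms] by blast
  then have "ind_principle D fI z s (\<lambda>d. holds D fI pI ((\<lambda>n. e'' (rank_in ?Z n))(x := d)) \<phi>)"
    using hyp by blast
  moreover have "holds D fI pI ((\<lambda>n. e'' (rank_in ?Z n))(x := d)) \<phi> = holds D fI pI (e'(x := d)) \<phi>" for d
    using e'' by (intro holds_cong) auto
  ultimately show "ind_principle D fI z s (\<lambda>d. holds D fI pI (e'(x := d)) \<phi>)"
    by simp
next
  fix e'' :: "nat \<Rightarrow> 'a"
  assume "\<forall>e'. range e' \<subseteq> D \<longrightarrow> ind_principle D fI z s (\<lambda>d. holds D fI pI (e'(x := d)) \<phi>)"
    and "range e'' \<subseteq> D"
  moreover have "range (\<lambda>n. e'' (rank_in (fv_fm \<phi> - {x}) n)) \<subseteq> D"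
    using \<open>range e'' \<subseteq> D\<close> by auto
  ultimately show "ind_principle D fI z s (\<lambda>d. holds D fI pI ((\<lambda>n. e'' (rank_in (fv_fm \<phi> - {x}) n))(x := d)) \<phi>)"
    by blast
qed

lemma wf_IND:
  "\<forall>\<gamma>\<in>\<Gamma>. wf_fm X P \<gamma> \<Longrightarrow> Sym z 0 \<in> X \<Longrightarrow>
    Sym s 1 \<in> X \<Longrightarrow> A \<in> IND z s \<Gamma> \<Longrightarrow> wf_fm X P A"
  by (auto simp: IND_def intro: wf_ind_ax)

lemma fv_IND: "A \<in> IND z s \<Gamma> \<Longrightarrow> fv_fm A = {}"
  by (auto simp: IND_def fv_ind_ax)

lemma holds_IND:
  assumes "is_model D fI pI (IND z s \<Gamma>)" and "\<gamma> \<in> \<Gamma>" and "range e \<subseteq> D"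
  shows "ind_principle D fI z s (\<lambda>d. holds D fI pI (e(x := d)) \<gamma>)"
proof -
  have "ind_ax z s x \<gamma> \<in> IND z s \<Gamma>"
    using assms(2) unfolding IND_def by blast
  then have "holds D fI pI e (ind_ax z s x \<gamma>)"
    using assms(1,3) by (auto simp: is_model_def)
  then have "\<forall>e'. range e' \<subseteq> D \<longrightarrow> ind_principle D fI z s (\<lambda>d. holds D fI pI (e'(x := d)) \<gamma>)"
    by (simp only: holds_ind_ax[OF assms(3)])
  from this[THEN spec, of e] assms(3) show ?thesis by (rule mp)
qed

section \<open>Skolem expansion of a structure\<close>

lemma size_le_size_list: "x \<in> set xs \<Longrightarrow> f x \<le> size_list f xs"
  by (rule size_list_estimation') auto

definition witness :: "'a set \<Rightarrow> ('a \<Rightarrow> bool) \<Rightarrow> 'a" where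
  "witness D H = (SOME d. d \<in> D \<and> ((\<exists>d'\<in>D. H d') \<longrightarrow> H d))"

lemma witness_in: "D \<noteq> {} \<Longrightarrow> witness D H \<in> D"
  unfolding witness_def by (rule someI2_ex) auto

lemma witness_holds: "\<exists>d\<in>D. H d \<Longrightarrow> H (witness D H)"
  unfolding witness_def by (rule someI2_ex) auto

text \<open>The arguments of a Skolem term are the values of the free variables of its formula in
increasing order (see skterm); skolem_env rebuilds from them an environment for the body.\<close>

definition skolem_env :: "nat list \<Rightarrow> 'a list \<Rightarrow> 'a \<Rightarrow> nat \<Rightarrow> 'a" where
  "skolem_env xs ds d n =
     (case n of 0 \<Rightarrow> d | Suc m \<Rightarrow> (case map_of (zip xs ds) m of None \<Rightarrow> d | Some v \<Rightarrow> v))"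

text \<open>The expansion interprets a Skolem symbol Sk q A outside F by a witness for (the negation
of, if q = QAll) its formula A, evaluated in the expansion itself; since A is smaller than
Sk q A, this is a recursion on the size of terms and formulas.\<close>

context
  fixes D :: "'a set" and fI :: "('f,'p) fs \<Rightarrow> 'a list \<Rightarrow> 'a" and pI :: "'p \<Rightarrow> 'a list \<Rightarrow> bool"
    and F :: "('f,'p) fs set"
begin

function expand_eval_tm :: "(nat \<Rightarrow> 'a) \<Rightarrow> ('f,'p) tm \<Rightarrow> 'a"
  and expand_holds :: "(nat \<Rightarrow> 'a) \<Rightarrow> ('f,'p) fm \<Rightarrow> bool" where
  "expand_eval_tm e (Var n) = e n"
| "expand_eval_tm e (App f ts) = (case f of
      Sk q A \<Rightarrow> (if Sk q A \<in> F then fI f (map (expand_eval_tm e) ts) else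
         witness D (\<lambda>d. expand_holds
           (skolem_env (sorted_list_of_set (fv_fm (qf q A))) (map (expand_eval_tm e) ts) d) A = (q = QEx)))
    | Sym g k \<Rightarrow> fI f (map (expand_eval_tm e) ts))"
| "expand_holds e (Pr p ts) = pI p (map (expand_eval_tm e) ts)"
| "expand_holds e (Eq s t) = (expand_eval_tm e s = expand_eval_tm e t)"
| "expand_holds e (Neg A) = (\<not> expand_holds e A)"
| "expand_holds e (Conj A B) = (expand_holds e A \<and> expand_holds e B)"
| "expand_holds e (Disj A B) = (expand_holds e A \<or> expand_holds e B)"
| "expand_holds e (All A) = (\<forall>d\<in>D. expand_holds (case_nat d e) A)"
| "expand_holds e (Ex A) = (\<exists>d\<in>D. expand_holds (case_nat d e) A)"
  by pat_completeness auto
termination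
  by (relation "measure (\<lambda>x. case x of Inl (e, t) \<Rightarrow> size t | Inr (e, A) \<Rightarrow> size A)")
     (auto dest!: size_le_size_list[where f = size])

end

definition skolem_expansion :: "'a set \<Rightarrow> (('f,'p) fs \<Rightarrow> 'a list \<Rightarrow> 'a) \<Rightarrow> ('p \<Rightarrow> 'a list \<Rightarrow> bool) \<Rightarrow>
    ('f,'p) fs set \<Rightarrow> ('f,'p) fs \<Rightarrow> 'a list \<Rightarrow> 'a" where
  "skolem_expansion D fI pI F f ds = (case f of
      Sk q A \<Rightarrow> (if Sk q A \<in> F then fI f ds else
         witness D (\<lambda>d. expand_holds D fI pI F
           (skolem_env (sorted_list_of_set (fv_fm (qf q A))) ds d) A = (q = QEx)))
    | Sym g k \<Rightarrow> fI f ds)"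

lemma expand_eval_eq:
  shows "expand_eval_tm D fI pI F e t = eval_tm (skolem_expansion D fI pI F) e t"
    and "expand_holds D fI pI F e A = holds D (skolem_expansion D fI pI F) pI e A"
proof (induction e t and e A rule: expand_eval_tm_expand_holds.induct[where D=D and fI=fI and pI=pI and F=F])
  case (2 e f ts)
  have "expand_eval_tm D fI pI F e t = eval_tm (skolem_expansion D fI pI F) e t" if "t \<in> set ts" for t
    using 2 that by (cases f) (auto split: if_splits)
  then have m: "map (expand_eval_tm D fI pI F e) ts = map (eval_tm (skolem_expansion D fI pI F) e) ts"
    by simp
  show ?case
    unfolding expand_eval_tm.simps eval_tm.simps m by (simp add: skolem_expansion_def split: fs.splits)
next
  case (3 e p ts)
  then have m: "map (expand_eval_tm D fI pI F e) ts = map (eval_tm (skolem_expansion D fI pI F) e) ts"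
    by simp
  show ?case
    unfolding expand_holds.simps holds.simps m ..
qed simp_all

lemma skolem_expansion_Sk:
  "Sk q A \<notin> F \<Longrightarrow> skolem_expansion D fI pI F (Sk q A) ds =
    witness D (\<lambda>d. holds D (skolem_expansion D fI pI F) pI
      (skolem_env (sorted_list_of_set (fv_fm (qf q A))) ds d) A = (q = QEx))"
  by (simp add: skolem_expansion_def expand_eval_eq)

lemma skolem_expansion_F: "f \<in> F \<Longrightarrow> skolem_expansion D fI pI F f = fI f"
  by (rule ext) (cases f; simp add: skolem_expansion_def)

lemma is_interp_skolem_expansion: "is_interp D fI \<Longrightarrow> is_interp D (skolem_expansion D fI pI F)"
  by (auto simp: is_interp_def skolem_expansion_def witness_in split: fs.split)

lemma eval_tm_skolem_expansion:
  "wf_tm F t \<Longrightarrow> eval_tm (skolem_expansion D fI pI F) e t = eval_tm fI e t"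
proof (induction t rule: fv_tm.induct)
  case (2 f ts)
  have m: "map (eval_tm (skolem_expansion D fI pI F) e) ts = map (eval_tm fI e) ts"
    by (rule map_cong[OF refl]) (use 2 in auto)
  show ?case using 2(2) by (simp only: eval_tm.simps m skolem_expansion_F wf_tm.simps)
qed simp

lemma holds_skolem_expansion:
  "wf_fm F P A \<Longrightarrow> holds D (skolem_expansion D fI pI F) pI e A = holds D fI pI e A"
proof (induction A arbitrary: e rule: fsize.induct)
  case (1 p ts)
  have m: "map (eval_tm (skolem_expansion D fI pI F) e) ts = map (eval_tm fI e) ts"
    by (rule map_cong[OF refl]) (use 1 in \<open>auto intro: eval_tm_skolem_expansion\<close>)
  show ?case by (simp only: holds.simps m)
qed (simp_all add: eval_tm_skolem_expansion)

lemma wf_skterm: "Sk q A \<in> X \<Longrightarrow> wf_tm X (skterm q A)"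
  by (simp add: skterm_def)

lemma skolem_env_agree:
  assumes "m \<in> fv_fm A"
  shows "skolem_env (sorted_list_of_set (fv_fm (qf q A))) (map e (sorted_list_of_set (fv_fm (qf q A)))) d m
    = case_nat d e m"
proof (cases m)
  case (Suc k)
  have map_of_zip_map: "map_of (zip xs (map e xs)) k = Some (e k)" if "k \<in> set xs" for xs
    using that by (induction xs) auto
  have "k \<in> fv_fm (qf q A)" using assms Suc by (cases q) auto
  then show ?thesis using Suc by (simp add: skolem_env_def map_of_zip_map)
qed (simp add: skolem_env_def)

lemma holds_inst_skterm:
  assumes "D \<noteq> {}" and "Sk q A \<notin> F"
  shows "holds D (skolem_expansion D fI pI F) pI e (inst (skterm q A) A) =
    holds D (skolem_expansion D fI pI F) pI e (qf q A)"
proof -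
  let ?J = "skolem_expansion D fI pI F"
  let ?xs = "sorted_list_of_set (fv_fm (qf q A))"
  let ?H = "\<lambda>d. holds D ?J pI (case_nat d e) A"
  have "holds D ?J pI (skolem_env ?xs (map e ?xs) d) A = ?H d" for d
    by (rule holds_cong) (rule skolem_env_agree)
  then have w: "eval_tm ?J e (skterm q A) = witness D (\<lambda>d. ?H d = (q = QEx))"
    using skolem_expansion_Sk[OF assms(2), of D fI pI "map e ?xs"] by (simp add: skterm_def comp_def)
  show ?thesis
  proof (cases "\<exists>d\<in>D. ?H d = (q = QEx)")
    case True
    then show ?thesis using witness_holds[OF True] w by (cases q) (auto simp: holds_inst)
  next
    case False
    then show ?thesis using witness_in[OF assms(1)] w by (cases q) (auto simp: holds_inst)
  qed
qed

lemma wf_sk: "wf_fm (F \<union> skolems F P) P A \<Longrightarrow> wf_fm (F \<union> skolems F P) P (sk q A)"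
proof (induction q A rule: sk.induct)
  case (6 q A)
  then show ?case
    using Sk_in_skolems[of F P QAll A] by (cases q) (auto intro: wf_inst wf_skterm)
next
  case (7 q A)
  then show ?case
    using Sk_in_skolems[of F P QEx A] by (cases q) (auto intro: wf_inst wf_skterm)
qed auto

lemma holds_sk:
  assumes sf: "skolem_free F P" and "D \<noteq> {}"
  shows "wf_fm (F \<union> skolems F P) P A \<Longrightarrow> range e \<subseteq> D \<Longrightarrow>
    holds D (skolem_expansion D fI pI F) pI e (sk q A) = holds D (skolem_expansion D fI pI F) pI e A"
proof (induction q A arbitrary: e rule: sk.induct)
  case (6 q A)
  show ?case
  proof (cases q)
    case QAll
    have "Sk QAll A \<notin> F"
      using Sk_notin_skolem_free[OF sf, of QAll A] 6(3) by simp
    moreover have "wf_fm (F \<union> skolems F P) P (inst (skterm QAll A) A)"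
      using Sk_in_skolems[of F P QAll A] 6(3) by (auto intro: wf_inst wf_skterm)
    ultimately show ?thesis
      using 6(1) 6(4) QAll holds_inst_skterm[OF assms(2), of QAll A] by simp
  next
    case QEx
    then show ?thesis using 6(2,3,4) by (auto simp: range_case_nat)
  qed
next
  case (7 q A)
  show ?case
  proof (cases q)
    case QEx
    have "Sk QEx A \<notin> F"
      using Sk_notin_skolem_free[OF sf, of QEx A] 7(3) by simp
    moreover have "wf_fm (F \<union> skolems F P) P (inst (skterm QEx A) A)"
      using Sk_in_skolems[of F P QEx A] 7(3) by (auto intro: wf_inst wf_skterm)
    ultimately show ?thesis
      using 7(1) 7(4) QEx holds_inst_skterm[OF assms(2), of QEx A] by simp
  next
    case QAll
    then show ?thesis using 7(2,3,4) by (auto simp: range_case_nat)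
  qed
qed auto

section \<open>Completeness\<close>

definition inconsistent :: "('f,'p) fm set \<Rightarrow> bool" where
  "inconsistent C \<longleftrightarrow> (\<exists>G A. set G \<subseteq> C \<and> nd G A \<and> nd G (Neg A))"

definition closed_fms :: "('f,'p) fs set \<Rightarrow> ('p \<times> nat) set \<Rightarrow> ('f,'p) fm set" where
  "closed_fms K P = {A. wf_fm K P A \<and> fv_fm A = {}}"

definition closed_tms :: "('f,'p) fs set \<Rightarrow> ('f,'p) tm set" where
  "closed_tms K = {t. wf_tm K t \<and> fv_tm t = {}}"

lemma inconsistent_insert:
  "inconsistent (insert A H) \<Longrightarrow>
    \<exists>G. set G \<subseteq> H \<and> (\<forall>B. nd (A # G) B)"
proof -
  assume "inconsistent (insert A H)"
  then obtain G X where G: "set G \<subseteq> insert A H" "nd G X" "nd G (Neg X)" by (auto simp: inconsistent_def)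
  define G' where "G' = filter (\<lambda>x. x \<noteq> A) G"
  have s: "set G \<subseteq> set (A # G')" by (auto simp: G'_def)
  have "nd (A # G') B" for B by (rule nd_explode[OF nd_weaken[OF G(2) s] nd_weaken[OF G(3) s]])
  moreover have "set G' \<subseteq> H" using G(1) by (auto simp: G'_def)
  ultimately show ?thesis by blast
qed

lemma lindenbaum:
  assumes c0: "\<not> inconsistent B0" and B0: "B0 \<subseteq> C0"
  shows "\<exists>H. B0 \<subseteq> H \<and> H \<subseteq> C0 \<and> \<not> inconsistent H \<and> (\<forall>A\<in>C0. A \<notin> H \<longrightarrow> inconsistent (insert A H))"
proof -
  let ?A = "{C. B0 \<subseteq> C \<and> C \<subseteq> C0 \<and> \<not> inconsistent C}"
  have "\<exists>M\<in>?A. \<forall>X\<in>?A. M \<subseteq> X \<longrightarrow> X = M"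
  proof (rule subset_Zorn_nonempty)
    show "?A \<noteq> {}" using c0 B0 by blast
  next
    fix \<C> assume ne: "\<C> \<noteq> {}" and ch: "subset.chain ?A \<C>"
    have sub: "\<C> \<subseteq> ?A" using ch by (auto simp: subset.chain_def)
    have "B0 \<subseteq> \<Union>\<C>" using ne sub by blast
    moreover have "\<Union>\<C> \<subseteq> C0" using sub by blast
    moreover have "\<not> inconsistent (\<Union>\<C>)"
    proof
      assume "inconsistent (\<Union>\<C>)"
      then obtain G X where G: "set G \<subseteq> \<Union>\<C>" "nd G X" "nd G (Neg X)" by (auto simp: inconsistent_def)
      obtain C where C: "C \<in> \<C>" "set G \<subseteq> C"
        using finite_subset_Union_chain[OF finite_set G(1) ne ch] by blast
      then have "inconsistent C" using G by (auto simp: inconsistent_def)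
      then show False using C sub by blast
    qed
    ultimately show "\<Union>\<C> \<in> ?A" by blast
  qed
  then obtain M where M: "M \<in> ?A" "\<forall>X\<in>?A. M \<subseteq> X \<longrightarrow> X = M" by blast
  have "\<forall>A\<in>C0. A \<notin> M \<longrightarrow> inconsistent (insert A M)"
  proof (intro ballI impI)
    fix A assume A: "A \<in> C0" "A \<notin> M"
    show "inconsistent (insert A M)"
    proof (rule ccontr)
      assume "\<not> inconsistent (insert A M)"
      then have "insert A M \<in> ?A" using M(1) A(1) by blast
      then have "insert A M = M" using M(2) by blast
      then show False using A(2) by blast
    qed
  qed
  then show ?thesis using M(1) by blast
qed

lemma map_tsub_closed_tms: "set xs \<subseteq> closed_tms K \<Longrightarrow> map (tsub \<sigma>) xs = xs"
  by (induction xs) (auto simp: closed_tms_def tsub_closed)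

locale maximal_consistent =
  fixes K :: "('f,'p) fs set" and P :: "('p \<times> nat) set" and H :: "('f,'p) fm set"
  assumes consistent: "\<not> inconsistent H" and subset_closed_fms: "H \<subseteq> closed_fms K P"
    and maximal: "\<forall>A\<in>closed_fms K P. A \<notin> H \<longrightarrow> inconsistent (insert A H)"
    and henkin: "henkin_axioms K P \<subseteq> H"
    and Sk_in_K: "\<And>A. wf_fm K P (Ex A) \<Longrightarrow> Sk QEx A \<in> K"
begin

lemma nd_mem:
  assumes "set G \<subseteq> H" and "nd G A" and "A \<in> closed_fms K P"
  shows "A \<in> H"
proof (rule ccontr)
  assume "A \<notin> H"
  then obtain G' where G': "set G' \<subseteq> H" "\<forall>B. nd (A # G') B"
    using maximal assms(3) inconsistent_insert by blast
  have A: "nd (G @ G') A" by (rule nd_weaken[OF assms(2)]) auto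
  have "nd (A # G @ G') (Neg A)" by (rule nd_weaken[OF G'(2)[rule_format, of "Neg A"]]) auto
  then have "nd (G @ G') (Neg A)" by (rule nd_cut[OF A])
  moreover have "set (G @ G') \<subseteq> H" using assms(1) G'(1) by simp
  ultimately show False using consistent A by (auto simp: inconsistent_def)
qed

lemma not_mem_and_Neg_mem: "A \<in> H \<Longrightarrow> Neg A \<in> H \<Longrightarrow> False"
proof -
  assume "A \<in> H" "Neg A \<in> H"
  then have "set [A, Neg A] \<subseteq> H" "nd [A, Neg A] A" "nd [A, Neg A] (Neg A)" by (auto intro: nd.Assm)
  then show False using consistent by (auto simp: inconsistent_def)
qed

lemma mem_or_Neg_mem: "A \<in> closed_fms K P \<Longrightarrow> A \<in> H \<or> Neg A \<in> H"
proof (rule ccontr)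
  assume A: "A \<in> closed_fms K P" "\<not> (A \<in> H \<or> Neg A \<in> H)"
  have nA: "Neg A \<in> closed_fms K P" using A(1) by (simp add: closed_fms_def)
  obtain G1 where G1: "set G1 \<subseteq> H" "\<forall>B. nd (A # G1) B" using inconsistent_insert maximal A by blast
  obtain G2 where G2: "set G2 \<subseteq> H" "\<forall>B. nd (Neg A # G2) B" using inconsistent_insert maximal A nA by blast
  have "nd (Neg A # G1 @ G2) A" by (rule nd_weaken[OF G2(2)[rule_format, of A]]) auto
  then have a: "nd (G1 @ G2) A" by (rule nd.Class) (simp add: nd.Assm)
  have "nd (A # G1 @ G2) (Neg A)" by (rule nd_weaken[OF G1(2)[rule_format, of "Neg A"]]) auto
  then have "nd (G1 @ G2) (Neg A)" by (rule nd_cut[OF a])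
  moreover have "set (G1 @ G2) \<subseteq> H" using G1(1) G2(1) by simp
  ultimately show False using consistent a by (auto simp: inconsistent_def)
qed

lemma Neg_mem: "A \<in> closed_fms K P \<Longrightarrow> Neg A \<in> H \<longleftrightarrow> A \<notin> H"
  using mem_or_Neg_mem not_mem_and_Neg_mem by blast

lemma closed_tms_nonempty: "closed_tms K \<noteq> {}"
proof -
  have "Sk QEx (Eq (Var 0) (Var 0)) \<in> K" by (rule Sk_in_K) simp
  then have "App (Sk QEx (Eq (Var 0) (Var 0))) [] \<in> closed_tms K"
    by (simp add: closed_tms_def)
  then show ?thesis by blast
qed

lemma inst_in_closed_fms:
  "wf_fm K P B \<Longrightarrow> fv_fm B \<subseteq> {0} \<Longrightarrow> t \<in> closed_tms K \<Longrightarrow> inst t B \<in> closed_fms K P"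
  unfolding closed_fms_def closed_tms_def using wf_inst fv_inst_closed by blast

lemma mp_mem:
  "Imp A B \<in> H \<Longrightarrow> A \<in> H \<Longrightarrow> B \<in> closed_fms K P \<Longrightarrow>
    B \<in> H"
proof -
  assume a: "Imp A B \<in> H" "A \<in> H" "B \<in> closed_fms K P"
  have "nd [Imp A B, A] B" by (rule nd_mp[of _ A B]) (rule nd.Assm, simp)+
  then show ?thesis using a by (intro nd_mem[of "[Imp A B, A]"]) auto
qed

lemma Conj_mem:
  assumes BC: "Conj B C \<in> closed_fms K P"
  shows "Conj B C \<in> H \<longleftrightarrow> B \<in> H \<and> C \<in> H"
proof
  have B: "B \<in> closed_fms K P" and C: "C \<in> closed_fms K P"
    using BC by (auto simp: closed_fms_def)
  have ndB: "nd [Conj B C] B" and ndC: "nd [Conj B C] C"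
    by (meson nd.Assm nd.ConjE1 nd.ConjE2 list.set_intros(1))+
  show "Conj B C \<in> H \<Longrightarrow> B \<in> H \<and> C \<in> H"
    using nd_mem[OF _ ndB B] nd_mem[OF _ ndC C] by simp
  have "nd [B, C] (Conj B C)" by (rule nd.ConjI) (rule nd.Assm, simp)+
  from nd_mem[OF _ this BC] show "B \<in> H \<and> C \<in> H \<Longrightarrow> Conj B C \<in> H"
    by simp
qed

lemma Disj_mem:
  assumes BC: "Disj B C \<in> closed_fms K P"
  shows "Disj B C \<in> H \<longleftrightarrow> B \<in> H \<or> C \<in> H"
proof
  assume "Disj B C \<in> H"
  show "B \<in> H \<or> C \<in> H"
  proof (rule ccontr)
    assume "\<not> (B \<in> H \<or> C \<in> H)"
    then have "Neg B \<in> H" "Neg C \<in> H" using mem_or_Neg_mem BC by (auto simp: closed_fms_def)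
    let ?G = "[Disj B C, Neg B, Neg C]"
    have "nd ?G B"
    proof (rule nd.DisjE[of _ B C])
      show "nd ?G (Disj B C)" by (rule nd.Assm) simp
      show "nd (B # ?G) B" by (rule nd.Assm) simp
      show "nd (C # ?G) B" by (rule nd_explode[of _ C]) (auto intro: nd.Assm)
    qed
    moreover have "nd ?G (Neg B)" by (rule nd.Assm) simp
    ultimately show False
      using consistent \<open>Disj B C \<in> H\<close> \<open>Neg B \<in> H\<close> \<open>Neg C \<in> H\<close> by (auto simp: inconsistent_def)
  qed
next
  have ndB: "nd [B] (Disj B C)" and ndC: "nd [C] (Disj B C)"
    by (meson nd.Assm nd.DisjI1 nd.DisjI2 list.set_intros(1))+
  show "B \<in> H \<or> C \<in> H \<Longrightarrow> Disj B C \<in> H"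
    using nd_mem[OF _ ndB BC] nd_mem[OF _ ndC BC] by auto
qed

lemma Sk_const_in_closed_tms:
  "Ex B \<in> closed_fms K P \<Longrightarrow> App (Sk QEx B) [] \<in> closed_tms K"
  using Sk_in_K by (simp add: closed_fms_def closed_tms_def)

lemma Ex_witness_mem:
  assumes "Ex B \<in> H"
  shows "inst (App (Sk QEx B) []) B \<in> H"
proof -
  have EB: "Ex B \<in> closed_fms K P" using assms subset_closed_fms by blast
  then have wf: "wf_fm K P B" and closed: "fv_fm B \<subseteq> {0}"
    using closed_Ex_iff by (auto simp: closed_fms_def)
  have "henkin_ax B \<in> H"
    using henkin EB by (auto simp: henkin_axioms_def closed_fms_def)
  then show ?thesis
    using mp_mem assms inst_in_closed_fms[OF wf closed Sk_const_in_closed_tms[OF EB]]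
    by (simp add: henkin_ax_def)
qed

lemma Ex_mem:
  assumes "Ex B \<in> closed_fms K P"
  shows "Ex B \<in> H \<longleftrightarrow> (\<exists>t\<in>closed_tms K. inst t B \<in> H)"
proof
  assume "Ex B \<in> H"
  then show "\<exists>t\<in>closed_tms K. inst t B \<in> H"
    using Ex_witness_mem Sk_const_in_closed_tms[OF assms] by blast
next
  assume "\<exists>t\<in>closed_tms K. inst t B \<in> H"
  then obtain t where "inst t B \<in> H" by blast
  have "nd [inst t B] (Ex B)" by (rule nd.ExI[of _ t]) (rule nd.Assm, simp)
  from nd_mem[OF _ this assms] show "Ex B \<in> H"
    using \<open>inst t B \<in> H\<close> by simp
qed

lemma All_mem:
  assumes AB: "All B \<in> closed_fms K P"
  shows "All B \<in> H \<longleftrightarrow> (\<forall>t\<in>closed_tms K. inst t B \<in> H)"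
proof
  have wf: "wf_fm K P B" and closed: "fv_fm B \<subseteq> {0}"
    using AB closed_All_iff by (auto simp: closed_fms_def)
  {
    assume "All B \<in> H"
    show "\<forall>t\<in>closed_tms K. inst t B \<in> H"
    proof
      fix t assume t: "t \<in> closed_tms K"
      have "nd [All B] (inst t B)" by (rule nd.AllE) (rule nd.Assm, simp)
      from nd_mem[OF _ this inst_in_closed_fms[OF wf closed t]] show "inst t B \<in> H"
        using \<open>All B \<in> H\<close> by simp
    qed
  next
    assume all: "\<forall>t\<in>closed_tms K. inst t B \<in> H"
    show "All B \<in> H"
    proof (rule ccontr)
      assume "All B \<notin> H"
      then have "Neg (All B) \<in> H" using mem_or_Neg_mem AB by blast
      moreover have EB: "Ex (Neg B) \<in> closed_fms K P"
        using wf closed closed_Ex_iff[of "Neg B"] by (simp add: closed_fms_def)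
      ultimately have "Ex (Neg B) \<in> H"
        using nd_mem[OF _ nd_Neg_All_Ex_Neg[OF closed]] by simp
      then obtain t where "t \<in> closed_tms K" "Neg (inst t B) \<in> H"
        using Ex_mem[OF EB] by (auto simp: inst_def)
      then show False using all not_mem_and_Neg_mem by blast
    qed
  }
qed

lemma Eq_refl_mem: "t \<in> closed_tms K \<Longrightarrow> Eq t t \<in> H"
  by (rule nd_mem[of "[]"]) (auto simp: nd.Refl closed_fms_def closed_tms_def)

lemma Subst_mem:
  assumes "t \<in> closed_tms K" "u \<in> closed_tms K" "Eq t u \<in> H" "inst t A \<in> H" "inst u A \<in> closed_fms K P"
  shows "inst u A \<in> H"
proof (rule nd_mem[of "[Eq t u, inst t A]"])
  show "set [Eq t u, inst t A] \<subseteq> H" using assms by simp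
  show "nd [Eq t u, inst t A] (inst u A)" by (rule nd.Subst) (auto intro: nd.Assm)
qed (rule assms(5))

lemma Eq_sym_mem:
  "t \<in> closed_tms K \<Longrightarrow> u \<in> closed_tms K \<Longrightarrow> Eq t u \<in> H \<Longrightarrow>
    Eq u t \<in> H"
proof -
  assume a: "t \<in> closed_tms K" "u \<in> closed_tms K" "Eq t u \<in> H"
  have i1: "inst t (Eq (Var 0) t) = Eq t t" and i2: "inst u (Eq (Var 0) t) = Eq u t"
    using a by (simp_all add: inst_def tsub_closed closed_tms_def)
  have "inst u (Eq (Var 0) t) \<in> H"
    by (rule Subst_mem[OF a]) (use a i1 i2 Eq_refl_mem in \<open>auto simp: closed_fms_def closed_tms_def\<close>)
  then show ?thesis using i2 by simp
qed

lemma Eq_trans_mem: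
  "t \<in> closed_tms K \<Longrightarrow> u \<in> closed_tms K \<Longrightarrow> v \<in> closed_tms K \<Longrightarrow>
    Eq t u \<in> H \<Longrightarrow> Eq u v \<in> H \<Longrightarrow> Eq t v \<in> H"
proof -
  assume a: "t \<in> closed_tms K" "u \<in> closed_tms K" "v \<in> closed_tms K" "Eq t u \<in> H" "Eq u v \<in> H"
  have i1: "inst u (Eq t (Var 0)) = Eq t u" and i2: "inst v (Eq t (Var 0)) = Eq t v"
    using a by (simp_all add: inst_def tsub_closed closed_tms_def)
  have "inst v (Eq t (Var 0)) \<in> H"
    by (rule Subst_mem[OF a(2,3,5)]) (use a i1 i2 in \<open>auto simp: closed_fms_def closed_tms_def\<close>)
  then show ?thesis using i2 by simp
qed

lemma Eq_subst_list_mem: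
  assumes \<Phi>: "\<And>t xs. inst t (\<Phi> xs) = \<Phi> (map (tsub (\<lambda>n. case n of 0 \<Rightarrow> t | Suc m \<Rightarrow> Var m)) xs)"
    and closed_fms\<Phi>: "\<And>xs. set xs \<subseteq> closed_tms K \<Longrightarrow> length xs = length ts \<Longrightarrow> \<Phi> xs \<in> closed_fms K P"
    and ts: "set ts \<subseteq> closed_tms K" and us: "set us \<subseteq> closed_tms K" and len: "length us = length ts"
    and eqs: "\<And>i. i < length ts \<Longrightarrow> Eq (ts ! i) (us ! i) \<in> H"
    and h: "\<Phi> ts \<in> H"
  shows "\<Phi> us \<in> H"
proof -
  have "i \<le> length ts \<Longrightarrow> \<Phi> (take i us @ drop i ts) \<in> H" for i
  proof (induction i)
    case 0 then show ?case using h by simp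
  next
    case (Suc i)
    then have i: "i < length ts" by simp
    let ?T = "\<Phi> (take i us @ Var 0 # drop (Suc i) ts)"
    have tsi: "ts ! i \<in> closed_tms K" using ts i by auto
    have usi: "us ! i \<in> closed_tms K" using us i len by auto
    have tk: "set (take i us) \<subseteq> closed_tms K" using us by (meson order_trans set_take_subset)
    have dr: "set (drop (Suc i) ts) \<subseteq> closed_tms K" using ts by (meson order_trans set_drop_subset)
    have m1: "map (tsub \<sigma>) (take i us) = take i us" for \<sigma> :: "nat \<Rightarrow> ('f,'p) tm" by (rule map_tsub_closed_tms[OF tk])
    have m2: "map (tsub \<sigma>) (drop (Suc i) ts) = drop (Suc i) ts" for \<sigma> :: "nat \<Rightarrow> ('f,'p) tm" by (rule map_tsub_closed_tms[OF dr])
    have e1: "inst (ts ! i) ?T = \<Phi> (take i us @ drop i ts)"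
      unfolding \<Phi> using m1 m2 i by (simp add: Cons_nth_drop_Suc)
    have e2: "inst (us ! i) ?T = \<Phi> (take (Suc i) us @ drop (Suc i) ts)"
      unfolding \<Phi> using m1 m2 i len by (simp add: take_Suc_conv_app_nth)
    have "inst (us ! i) ?T \<in> H"
    proof (rule Subst_mem[OF tsi usi eqs[OF i]])
      show "inst (ts ! i) ?T \<in> H" using e1 Suc by simp
      have "set (take (Suc i) us @ drop (Suc i) ts) \<subseteq> closed_tms K"
        using us dr set_take_subset[of "Suc i" us] by auto
      moreover have "length (take (Suc i) us @ drop (Suc i) ts) = length ts" using i len by simp
      ultimately show "inst (us ! i) ?T \<in> closed_fms K P" unfolding e2 by (rule closed_fms\<Phi>)
    qed
    then show ?case using e2 by simp
  qed
  from this[of "length ts"] show ?thesis using len by simp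
qed

definition eq_class :: "('f,'p) tm \<Rightarrow> ('f,'p) tm set" where
  "eq_class t = {u \<in> closed_tms K. Eq t u \<in> H}"

definition eq_classes :: "('f,'p) tm set set" where
  "eq_classes = eq_class ` closed_tms K"

definition rep :: "('f,'p) tm set \<Rightarrow> ('f,'p) tm" where
  "rep d = (SOME t. t \<in> closed_tms K \<and> d = eq_class t)"

definition term_fun :: "('f,'p) fs \<Rightarrow> ('f,'p) tm set list \<Rightarrow> ('f,'p) tm set" where
  "term_fun f ds = (if f \<in> K \<and> length ds = arity f \<and> set ds \<subseteq> eq_classes then eq_class (App f (map rep ds))
     else (SOME d. d \<in> eq_classes))"

definition term_pred :: "'p \<Rightarrow> ('f,'p) tm set list \<Rightarrow> bool" where
  "term_pred p ds = (Pr p (map rep ds) \<in> H)"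

lemma eq_class_eq_iff:
  "t \<in> closed_tms K \<Longrightarrow> u \<in> closed_tms K \<Longrightarrow>
    eq_class t = eq_class u \<longleftrightarrow> Eq t u \<in> H"
proof
  assume a: "t \<in> closed_tms K" "u \<in> closed_tms K" "eq_class t = eq_class u"
  have "u \<in> eq_class u" using a Eq_refl_mem by (simp add: eq_class_def)
  then have "u \<in> eq_class t" using a(3) by simp
  then show "Eq t u \<in> H" by (simp add: eq_class_def)
next
  assume a: "t \<in> closed_tms K" "u \<in> closed_tms K" "Eq t u \<in> H"
  show "eq_class t = eq_class u"
    unfolding eq_class_def using a Eq_trans_mem Eq_sym_mem by blast
qed

lemma rep_eq_class:
  "d \<in> eq_classes \<Longrightarrow> rep d \<in> closed_tms K \<and> eq_class (rep d) = d"
proof -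
  assume "d \<in> eq_classes"
  then have "\<exists>t. t \<in> closed_tms K \<and> d = eq_class t" by (auto simp: eq_classes_def)
  then have "rep d \<in> closed_tms K \<and> d = eq_class (rep d)" unfolding rep_def by (rule someI_ex)
  then show ?thesis by simp
qed

lemma Eq_rep_eq_class:
  "t \<in> closed_tms K \<Longrightarrow>
    rep (eq_class t) \<in> closed_tms K \<and> Eq t (rep (eq_class t)) \<in> H"
proof -
  assume t: "t \<in> closed_tms K"
  have "eq_class t \<in> eq_classes" using t by (simp add: eq_classes_def)
  then have r: "rep (eq_class t) \<in> closed_tms K" "eq_class (rep (eq_class t)) = eq_class t" using rep_eq_class by blast+
  then have "Eq (rep (eq_class t)) t \<in> H" using eq_class_eq_iff t by blast
  then show ?thesis using Eq_sym_mem r t by blast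
qed

lemma App_in_closed_tms:
  "App f ts \<in> closed_tms K \<longleftrightarrow> f \<in> K \<and> length ts = arity f \<and> set ts \<subseteq> closed_tms K"
  by (auto simp: closed_tms_def)

lemma is_interp_term_model: "is_interp eq_classes term_fun"
proof -
  have "eq_classes \<noteq> {}" using closed_tms_nonempty by (simp add: eq_classes_def)
  moreover have "term_fun f ds \<in> eq_classes" if "set ds \<subseteq> eq_classes" for f ds
  proof -
    have "set (map rep ds) \<subseteq> closed_tms K" using rep_eq_class that by auto
    then show ?thesis
      using that \<open>eq_classes \<noteq> {}\<close> by (auto simp: term_fun_def eq_classes_def App_in_closed_tms some_in_eq)
  qed
  ultimately show ?thesis by (simp add: is_interp_def)
qed

lemma eval_tm_term_model: "t \<in> closed_tms K \<Longrightarrow> eval_tm term_fun e t = eq_class t"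
proof (induction t rule: fv_tm.induct)
  case (1 n) then show ?case by (simp add: closed_tms_def)
next
  case (2 f ts)
  have f: "f \<in> K" "length ts = arity f" "set ts \<subseteq> closed_tms K" using 2(2) App_in_closed_tms by blast+
  have m: "map (eval_tm term_fun e) ts = map eq_class ts" using 2(1) f(3) by auto
  have sD: "set (map eq_class ts) \<subseteq> eq_classes" using f(3) by (auto simp: eq_classes_def)
  have "eval_tm term_fun e (App f ts) = eq_class (App f (map rep (map eq_class ts)))"
    using f sD by (simp add: m term_fun_def)
  also have "\<dots> = eq_class (App f ts)"
  proof -
    let ?us = "map rep (map eq_class ts)"
    have us: "set ?us \<subseteq> closed_tms K" using Eq_rep_eq_class f(3) by auto
    have "Eq (App f ts) (App f ?us) \<in> H"
    proof (rule Eq_subst_list_mem[where \<Phi>="\<lambda>xs. Eq (App f ts) (App f xs)" and ts=ts])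
      show "inst t (Eq (App f ts) (App f xs)) = Eq (App f ts) (App f (map (tsub (\<lambda>n. case n of 0 \<Rightarrow> t | Suc m \<Rightarrow> Var m)) xs))" for t xs
        using 2(2) by (simp add: inst_def closed_tms_def tsub_closed del: tsub.simps) (simp add: tsub_closed)
      show "Eq (App f ts) (App f xs) \<in> closed_fms K P" if "set xs \<subseteq> closed_tms K" "length xs = length ts" for xs
        using that 2(2) f by (auto simp: closed_fms_def closed_tms_def)
      show "Eq (ts ! i) (?us ! i) \<in> H" if "i < length ts" for i
      proof -
        have "ts ! i \<in> closed_tms K" using f(3) that by (meson nth_mem subsetD)
        then show ?thesis using Eq_rep_eq_class[of "ts ! i"] that by simp
      qed
      show "Eq (App f ts) (App f ts) \<in> H" by (rule Eq_refl_mem[OF 2(2)])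
    qed (use f us in auto)
    moreover have "App f ?us \<in> closed_tms K" using us f by (simp add: App_in_closed_tms)
    ultimately show ?thesis using eq_class_eq_iff 2(2) by metis
  qed
  finally show ?case .
qed

lemma Pr_rep_mem:
  "Pr p ts \<in> closed_fms K P \<Longrightarrow>
    Pr p ts \<in> H \<longleftrightarrow> Pr p (map rep (map eq_class ts)) \<in> H"
proof -
  assume cf: "Pr p ts \<in> closed_fms K P"
  then have ts: "set ts \<subseteq> closed_tms K" and pp: "(p, length ts) \<in> P" by (auto simp: closed_fms_def closed_tms_def)
  let ?us = "map rep (map eq_class ts)"
  have us: "set ?us \<subseteq> closed_tms K" using Eq_rep_eq_class ts by auto
  have nth: "ts ! i \<in> closed_tms K" if "i < length ts" for i using ts that by (meson nth_mem subsetD)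
  have \<Phi>: "inst t (Pr p xs) = Pr p (map (tsub (\<lambda>n. case n of 0 \<Rightarrow> t | Suc m \<Rightarrow> Var m)) xs)"
    for t :: "('f,'p) tm" and xs
    by (simp add: inst_def)
  have closed_fms\<Phi>: "Pr p xs \<in> closed_fms K P" if "set xs \<subseteq> closed_tms K" "length xs = length ts" for xs
    using that pp by (auto simp: closed_fms_def closed_tms_def)
  show ?thesis
  proof
    assume h: "Pr p ts \<in> H"
    show "Pr p ?us \<in> H"
    proof (rule Eq_subst_list_mem[where \<Phi>="Pr p", OF \<Phi> closed_fms\<Phi> ts us])
      show "length ?us = length ts" by simp
      show "Eq (ts ! i) (?us ! i) \<in> H" if "i < length ts" for i
        using Eq_rep_eq_class[of "ts ! i"] nth[of i] that by auto
    qed (use h in auto)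
  next
    assume h: "Pr p ?us \<in> H"
    have closed_fms\<Phi>': "Pr p xs \<in> closed_fms K P" if "set xs \<subseteq> closed_tms K" "length xs = length ?us" for xs
      using that pp by (auto simp: closed_fms_def closed_tms_def)
    show "Pr p ts \<in> H"
    proof (rule Eq_subst_list_mem[where \<Phi>="Pr p", OF \<Phi> closed_fms\<Phi>' us ts])
      show "length ts = length ?us" by simp
      show "Eq (?us ! i) (ts ! i) \<in> H" if "i < length ?us" for i
        using Eq_rep_eq_class[of "ts ! i"] nth[of i] that Eq_sym_mem by auto
    qed (use h in auto)
  qed
qed

lemma holds_term_model:
  "A \<in> closed_fms K P \<Longrightarrow>
    holds eq_classes term_fun term_pred e A \<longleftrightarrow> A \<in> H"
proof (induction "fsize A" arbitrary: A rule: less_induct)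
  case less
  have closed_sub: "B \<in> closed_fms K P" "C \<in> closed_fms K P"
    if "A = Conj B C \<or> A = Disj B C" for B C
    using less(2) that by (auto simp: closed_fms_def)
  have closed_inst: "inst t B \<in> closed_fms K P" if "A = All B \<or> A = Ex B" "t \<in> closed_tms K" for B t
  proof -
    have "wf_fm K P B" "fv_fm B \<subseteq> {0}"
      using less(2) that(1) closed_All_iff[of B] closed_Ex_iff[of B] by (auto simp: closed_fms_def)
    then show ?thesis using inst_in_closed_fms that(2) by blast
  qed
  have holds_inst_eq_class: "holds eq_classes term_fun term_pred (case_nat (eq_class t) e) B \<longleftrightarrow> inst t B \<in> H"
    if "A = All B \<or> A = Ex B" "t \<in> closed_tms K" for B t
    using less(1)[of "inst t B"] closed_inst[OF that] that eval_tm_term_model[of t e]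
    by (auto simp: holds_inst)
  show ?case
  proof (cases A)
    case (Pr p ts)
    then have "set ts \<subseteq> closed_tms K"
      using less(2) by (auto simp: closed_fms_def closed_tms_def)
    then have "map (eval_tm term_fun e) ts = map eq_class ts" using eval_tm_term_model by auto
    then have "holds eq_classes term_fun term_pred e A = (Pr p (map rep (map eq_class ts)) \<in> H)"
      by (simp only: Pr holds.simps term_pred_def)
    then show ?thesis using Pr_rep_mem less(2) Pr by simp
  next
    case (Eq t u)
    then have "t \<in> closed_tms K" "u \<in> closed_tms K"
      using less(2) by (auto simp: closed_fms_def closed_tms_def)
    then show ?thesis using Eq eval_tm_term_model eq_class_eq_iff by simp
  next
    case (Neg B)
    then have "B \<in> closed_fms K P" using less(2) by (simp add: closed_fms_def)
    then show ?thesis using less(1)[of B] Neg Neg_mem by simp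
  next
    case (Conj B C)
    then show ?thesis using less(1)[of B] less(1)[of C] closed_sub Conj_mem less(2) by simp
  next
    case (Disj B C)
    then show ?thesis using less(1)[of B] less(1)[of C] closed_sub Disj_mem less(2) by simp
  next
    case (All B)
    then show ?thesis using All_mem less(2) holds_inst_eq_class by (auto simp: eq_classes_def)
  next
    case (Ex B)
    then show ?thesis using Ex_mem less(2) holds_inst_eq_class by (auto simp: eq_classes_def)
  qed
qed

end

lemma consistent_with_henkin_axioms:
  assumes sf: "skolem_free F P" and S: "\<forall>A\<in>S. wf_fm F P A \<and> fv_fm A = {}"
    and "wf_fm F P \<psi>" "fv_fm \<psi> = {}" and "\<not> prov S \<psi>"
  shows "\<not> inconsistent (insert (Neg \<psi>) S \<union> henkin_axioms (F \<union> skolems F P) P)"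
proof
  assume "inconsistent (insert (Neg \<psi>) S \<union> henkin_axioms (F \<union> skolems F P) P)"
  then obtain G A where G: "set G \<subseteq> insert (Neg \<psi>) S \<union> henkin_axioms (F \<union> skolems F P) P"
      "nd G A" "nd G (Neg A)"
    by (auto simp: inconsistent_def)
  have "\<forall>C\<in>insert (Neg \<psi>) S. syms_fm C \<subseteq> F \<and> fv_fm C = {}"
    using S assms(3,4) by (auto dest: wf_fm_syms)
  then obtain G' where G': "set G' \<subseteq> insert (Neg \<psi>) S" "nd G' \<psi>"
    using nd_elim_henkin_axioms[OF sf _ wf_fm_syms[OF assms(3)] assms(4) G(1) nd_explode[OF G(2,3)]]
    by blast
  define G'' where "G'' = filter (\<lambda>C. C \<noteq> Neg \<psi>) G'"
  have "nd (Neg \<psi> # G'') \<psi>" by (rule nd_weaken[OF G'(2)]) (auto simp: G''_def)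
  then have "nd G'' \<psi>" by (rule nd.Class) (simp add: nd.Assm)
  moreover have "set G'' \<subseteq> S" using G'(1) by (auto simp: G''_def)
  ultimately show False using assms(5) by (auto simp: prov_def)
qed

lemma henkin_axioms_closed_fms:
  "henkin_axioms (F \<union> skolems F P) P \<subseteq> closed_fms (F \<union> skolems F P) P"
  using Sk_in_skolems[of F P QEx] wf_henkin_ax fv_henkin_ax
  by (fastforce simp: henkin_axioms_def closed_fms_def)

lemma countermodel_closed:
  fixes S :: "('f,'p) fm set"
  assumes sf: "skolem_free F P" and S: "\<forall>A\<in>S. wf_fm F P A \<and> fv_fm A = {}"
    and "wf_fm F P \<psi>" "fv_fm \<psi> = {}" and "\<not> prov S \<psi>"
  shows "\<exists>(D :: ('f,'p) tm set set) fI pI. is_model D fI pI S \<and> (\<forall>e. \<not> holds D fI pI e \<psi>)"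
proof -
  let ?K = "F \<union> skolems F P"
  have closed: "insert (Neg \<psi>) S \<union> henkin_axioms ?K P \<subseteq> closed_fms ?K P"
    using S assms(3,4) henkin_axioms_closed_fms[of F P] by (auto simp: closed_fms_def intro: wf_fm_mono)
  obtain H where H: "insert (Neg \<psi>) S \<union> henkin_axioms ?K P \<subseteq> H" "H \<subseteq> closed_fms ?K P"
      "\<not> inconsistent H" "\<forall>A\<in>closed_fms ?K P. A \<notin> H \<longrightarrow> inconsistent (insert A H)"
    using lindenbaum[OF consistent_with_henkin_axioms[OF assms] closed] by blast
  interpret maximal_consistent ?K P H
    by unfold_locales (use H Sk_in_skolems[of F P QEx] in auto)
  have model: "holds eq_classes term_fun term_pred e A" if "A \<in> insert (Neg \<psi>) S" for A e
  proof -
    have "A \<in> H" using H(1) that by blast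
    then show ?thesis using holds_term_model[of A e] H(2) by blast
  qed
  have "is_model eq_classes term_fun term_pred S"
    using model is_interp_term_model by (auto simp: is_model_def)
  moreover have "\<not> holds eq_classes term_fun term_pred e \<psi>" for e
    using model[of "Neg \<psi>" e] by simp
  ultimately show ?thesis
    by (intro exI[where x = eq_classes] exI[where x = term_fun] exI[where x = term_pred]) simp
qed

lemma completeness:
  fixes S :: "('f,'p) fm set"
  assumes "skolem_free F P" and "\<forall>A\<in>S. wf_fm F P A \<and> fv_fm A = {}"
    and "wf_fm F P \<phi>" and "\<not> prov S \<phi>"
  shows "\<exists>(D :: ('f,'p) tm set set) fI pI e. is_model D fI pI S \<and> range e \<subseteq> D \<and> \<not> holds D fI pI e \<phi>"
proof -
  obtain N where "fv_fm \<phi> \<subseteq> {..<N}"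
    using finite_fv_fm[of \<phi>] unfolding finite_nat_set_iff_bounded by blast
  then have "fv_fm ((All ^^ N) \<phi>) = {}" by (auto simp: fv_Alls)
  moreover have "\<not> prov S ((All ^^ N) \<phi>)"
    using assms(2,4) nd_Alls_strip by (fastforce simp: prov_def)
  ultimately obtain D :: "('f,'p) tm set set" and fI pI
    where M: "is_model D fI pI S" "\<forall>e. \<not> holds D fI pI e ((All ^^ N) \<phi>)"
    using countermodel_closed[OF assms(1,2)] assms(3) by (metis wf_Alls)
  then obtain d where "d \<in> D" by (auto simp: is_model_def is_interp_def)
  then show ?thesis
    using M holds_Alls[of "\<lambda>_. d" D] by blast
qed

section \<open>Soundness of ground Skolem induction\<close>

lemma holds_ground_ind_instance:
  assumes IND: "is_model D fI pI (IND z s \<Gamma>)" and "\<gamma> \<in> \<Gamma>" and "wf_fm F P \<gamma>"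
    and zs: "Sym z 0 \<in> F" "Sym s 1 \<in> F"
    and \<sigma>: "\<forall>n. \<sigma> n = Var n \<or> fv_tm (\<sigma> n) = {}" and "range e \<subseteq> D"
  shows "holds D (skolem_expansion D fI pI F) pI e (ind_ax z s x (fsub \<sigma> \<gamma>))"
  unfolding holds_ind_ax[OF assms(7)]
proof (intro allI impI)
  let ?J = "skolem_expansion D fI pI F"
  fix e' :: "nat \<Rightarrow> 'a" assume e': "range e' \<subseteq> D"
  have x_fresh: "x \<notin> fv_tm (\<sigma> n)" if "n \<noteq> x \<or> \<sigma> x \<noteq> Var x" for n
    using \<sigma> that by (metis empty_iff fv_tm.simps(1) singletonD)
  show "ind_principle D ?J z s (\<lambda>d. holds D ?J pI (e'(x := d)) (fsub \<sigma> \<gamma>))"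
  proof (cases "\<sigma> x = Var x")
    case True
    let ?g = "\<lambda>n. eval_tm ?J e' (\<sigma> n)"
    have "is_interp D ?J"
      using IND is_interp_skolem_expansion by (auto simp: is_model_def)
    then have "range ?g \<subseteq> D" by (auto intro: eval_tm_in[OF _ e'])
    then have ind: "ind_principle D fI z s (\<lambda>d. holds D fI pI (?g(x := d)) \<gamma>)"
      by (rule holds_IND[OF IND \<open>\<gamma> \<in> \<Gamma>\<close>])
    have "(\<lambda>n. eval_tm ?J (e'(x := d)) (\<sigma> n)) = ?g(x := d)" for d
    proof
      fix n
      show "eval_tm ?J (e'(x := d)) (\<sigma> n) = (?g(x := d)) n"
      proof (cases "n = x")
        case False
        have "eval_tm ?J (e'(x := d)) (\<sigma> n) = eval_tm ?J e' (\<sigma> n)"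
          by (rule eval_tm_cong) (use x_fresh False in auto)
        then show ?thesis using False by simp
      qed (simp add: True)
    qed
    then have "(\<lambda>d. holds D ?J pI (e'(x := d)) (fsub \<sigma> \<gamma>)) = (\<lambda>d. holds D fI pI (?g(x := d)) \<gamma>)"
      by (simp add: holds_fsub holds_skolem_expansion[OF \<open>wf_fm F P \<gamma>\<close>])
    moreover have "ind_principle D ?J z s = ind_principle D fI z s"
      using zs by (intro ind_principle_cong) (simp_all add: skolem_expansion_F)
    ultimately show ?thesis
      using ind by (simp only:)
  next
    case False
    then have "x \<notin> fv_fm (fsub \<sigma> \<gamma>)"
      using x_fresh by (simp add: fv_fsub)
    then have "holds D ?J pI (e'(x := d)) (fsub \<sigma> \<gamma>) = holds D ?J pI e' (fsub \<sigma> \<gamma>)" for d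
      by (intro holds_cong) auto
    then show ?thesis by (simp add: ind_principle_def)
  qed
qed

lemma GSI_sound:
  assumes sf: "skolem_free F P" and zs: "Sym z 0 \<in> F" "Sym s 1 \<in> F"
    and \<Gamma>: "\<forall>\<gamma>\<in>\<Gamma>. wf_fm F P \<gamma>" and IND: "is_model D fI pI (IND z s \<Gamma>)"
    and X: "\<forall>B\<in>X. wf_fm (F \<union> skolems F P) P B" "is_model D (skolem_expansion D fI pI F) pI X"
  shows "\<forall>B\<in>GSI F z s \<Gamma> X. wf_fm (F \<union> skolems F P) P B"
    and "is_model D (skolem_expansion D fI pI F) pI (GSI F z s \<Gamma> X)"
proof -
  let ?K = "F \<union> skolems F P" and ?J = "skolem_expansion D fI pI F"
  have new: "wf_fm ?K P B \<and> (\<forall>e. range e \<subseteq> D \<longrightarrow> holds D ?J pI e B)"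
    if B_new: "B \<in> sk QEx ` IND z s (minus (down \<Gamma> (lang F X)))" for B
  proof -
    obtain x \<gamma>' where B: "B = sk QEx (ind_ax z s x \<gamma>')" and "\<gamma>' \<in> down \<Gamma> (lang F X)"
      using B_new by (auto simp: IND_def minus_def)
    then obtain \<sigma> \<gamma> where \<gamma>': "\<gamma>' = fsub \<sigma> \<gamma>" and "\<gamma> \<in> \<Gamma>"
      and \<sigma>: "\<forall>n. \<sigma> n = Var n \<or> (wf_tm (lang F X) (\<sigma> n) \<and> fv_tm (\<sigma> n) = {})"
      by (auto simp: down_def)
    have "lang F X \<subseteq> ?K"
      using X(1) wf_fm_syms by (fastforce simp: lang_def)
    then have "wf_tm ?K (\<sigma> n)" for n
      using \<sigma> wf_tm_mono by (metis wf_tm.simps(1))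
    then have wf: "wf_fm ?K P (ind_ax z s x \<gamma>')"
      unfolding \<gamma>' using \<Gamma> \<open>\<gamma> \<in> \<Gamma>\<close> zs by (intro wf_ind_ax wf_fsub) (auto intro: wf_fm_mono)
    have "\<forall>n. \<sigma> n = Var n \<or> fv_tm (\<sigma> n) = {}" using \<sigma> by blast
    then have ind: "holds D ?J pI e (ind_ax z s x \<gamma>')" if "range e \<subseteq> D" for e
      unfolding \<gamma>' using holds_ground_ind_instance[OF IND \<open>\<gamma> \<in> \<Gamma>\<close> _ zs _ that] \<Gamma> \<open>\<gamma> \<in> \<Gamma>\<close>
      by blast
    have "D \<noteq> {}" using IND by (simp add: is_model_def is_interp_def)
    show ?thesis
    proof (intro conjI allI impI)
      show "wf_fm ?K P B" using B wf_sk[OF wf] by simp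
      show "holds D ?J pI e B" if "range e \<subseteq> D" for e
        using B ind[OF that] holds_sk[OF sf \<open>D \<noteq> {}\<close> wf that] by simp
    qed
  qed
  show "\<forall>B\<in>GSI F z s \<Gamma> X. wf_fm ?K P B"
    using X(1) new by (auto simp: GSI_def)
  show "is_model D ?J pI (GSI F z s \<Gamma> X)"
    using X(2) new by (auto simp: GSI_def is_model_def)
qed

lemma GSI_omega_sound:
  assumes sf: "skolem_free F P" and zs: "Sym z 0 \<in> F" "Sym s 1 \<in> F"
    and T: "\<forall>A\<in>T. wf_fm F P A" and \<Gamma>: "\<forall>\<gamma>\<in>\<Gamma>. wf_fm F P \<gamma>"
    and M: "is_model D fI pI (T \<union> IND z s \<Gamma>)"
  shows "is_model D (skolem_expansion D fI pI F) pI (GSI_omega F z s \<Gamma> (sk QEx ` T))"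
proof -
  let ?K = "F \<union> skolems F P" and ?J = "skolem_expansion D fI pI F"
  have I: "is_interp D fI" and "D \<noteq> {}" using M by (auto simp: is_model_def is_interp_def)
  have IND: "is_model D fI pI (IND z s \<Gamma>)" using M by (simp add: is_model_def)
  have wfT: "wf_fm ?K P A" if "A \<in> T" for A
    using T that by (auto intro: wf_fm_mono)
  have "holds D ?J pI e (sk QEx A)" if "A \<in> T" "range e \<subseteq> D" for A e
  proof -
    have "holds D fI pI e A" using M that by (auto simp: is_model_def)
    then show ?thesis
      using holds_sk[OF sf \<open>D \<noteq> {}\<close> wfT[OF that(1)] that(2)]
        holds_skolem_expansion[of F P A D fI pI e] T that(1) by simp
  qed
  then have "is_model D ?J pI (sk QEx ` T)"
    using is_interp_skolem_expansion[OF I] by (auto simp: is_model_def)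
  moreover have "\<forall>B\<in>sk QEx ` T. wf_fm ?K P B"
    using wfT wf_sk by blast
  ultimately have "(\<forall>B\<in>(GSI F z s \<Gamma> ^^ i) (sk QEx ` T). wf_fm ?K P B) \<and>
      is_model D ?J pI ((GSI F z s \<Gamma> ^^ i) (sk QEx ` T))" for i
    using GSI_sound[OF sf zs \<Gamma> IND] by (induction i) auto
  then show ?thesis
    by (auto simp: GSI_omega_def is_model_def)
qed

theorem proposition12:
  fixes F :: "('f,'p) fs set" and P :: "('p \<times> nat) set"
    and z s :: 'f and T \<Gamma> :: "('f,'p) fm set" and \<phi> :: "('f,'p) fm"
  assumes "skolem_free F P"
    and "Sym z 0 \<in> F" and "Sym s 1 \<in> F"
    and "\<forall>A\<in>T. wf_fm F P A \<and> fv_fm A = {}"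
    and "\<forall>\<gamma>\<in>\<Gamma>. wf_fm F P \<gamma>"
    and "wf_fm F P \<phi>"
    and "prov (GSI_omega F z s \<Gamma> (sk QEx ` T)) \<phi>"
  shows "prov (T \<union> IND z s \<Gamma>) \<phi>"
proof (rule ccontr)
  assume unprovable: "\<not> prov (T \<union> IND z s \<Gamma>) \<phi>"
  have "\<forall>A\<in>T \<union> IND z s \<Gamma>. wf_fm F P A \<and> fv_fm A = {}"
    using assms(4) wf_IND[OF assms(5,2,3)] fv_IND[of _ z s \<Gamma>] by auto
  then obtain D :: "('f,'p) tm set set" and fI pI e
    where M: "is_model D fI pI (T \<union> IND z s \<Gamma>)" "range e \<subseteq> D" "\<not> holds D fI pI e \<phi>"
    using completeness[OF assms(1) _ assms(6) unprovable] by blast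
  have "\<forall>A\<in>T. wf_fm F P A" using assms(4) by blast
  then have "is_model D (skolem_expansion D fI pI F) pI (GSI_omega F z s \<Gamma> (sk QEx ` T))"
    by (rule GSI_omega_sound[OF assms(1-3) _ assms(5) M(1)])
  then have "holds D (skolem_expansion D fI pI F) pI e \<phi>"
    by (rule prov_sound[OF assms(7) _ M(2)])
  moreover have "holds D (skolem_expansion D fI pI F) pI e \<phi> = holds D fI pI e \<phi>"
    by (rule holds_skolem_expansion[OF assms(6)])
  ultimately show False
    using M(3) by simp
qed

end
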